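(* Let $n=1$, $\mathcal{D}=(0,1)$, let $\ell_0\ge2$ and $L>\ell_0$ be integers, and let $\eta,\beta\in H^1_{\rm per}(\mathcal{D})$ (real-valued) and $\rho\in L^2(\mathcal{D})$ (real-valued). Consider the sesquilinear form $a(u,v)=\int_0^1\big(\eta u'\overline{v'}+\beta u'\overline{v}+\rho u\overline v\big)\,dx$ and the local $a$-coherence $\mu_q=\sup_{j\in\mathcal{J}}|a(\widehat\psi_j,\widehat\xi_q)|^2$, $q\in\mathbb{Z}$, of the normalized wavelet basis $\widehat\Psi$ with respect to the normalized Fourier basis (see context). Then $$\mu_0\lesssim 2^{-2\ell_0}\big(|\beta|_{H^1(\mathcal{D})}^2+\|\rho\|_{L^2(\mathcal{D})}^2\big),$$ $$\mu_q\lesssim\Big(\|\eta\|_{H^1(\mathcal{D})}^2+\frac{\|\beta\|_{H^1(\mathcal{D})}^2}{q^2}+\|\rho\|_{L^2(\mathcal{D})}^2\Big)\min\Big\{\frac{2^L}{q^2},\frac1{|q|}\Big\},\qquad\forall q\in\mathbb{Z}\setminus\{0\},$$ where $\lesssim$ hides a constant independent of $q$, $L$ and of $\eta,\beta,\rho$.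
   Context: Functions are complex-valued, $(u,v)=\int_0^1u\bar v$, $\|u\|_{H^1}^2=\|u\|_{L^2}^2+\|u'\|_{L^2}^2$, $|u|_{H^1}=\|u'\|_{L^2}$, and $H^1_{\rm per}(\mathcal{D})$ is the closure in the $H^1$-norm of restrictions to $(0,1)$ of smooth 1-periodic functions. Wavelets: $\varphi(x)=\max\{0,1-|x|\}$ (hat function), $\psi(x)=\sum_{j=-1}^3b_j\varphi(2x-j)$ with $(b_{-1},\dots,b_3)=(\tfrac14,\tfrac12,-\tfrac32,\tfrac12,\tfrac14)$ (biorthogonal B-spline wavelets of order $(2,2)$); $\varphi_{\ell,k}(x)=2^{\ell/2}\varphi(2^\ell x-k)$, $\psi_{\ell,k}(x)=2^{\ell/2}\psi(2^\ell x-k)$, replaced by their 1-periodizations $f^{\rm per}(x)=\sum_{j\in\mathbb{Z}}f(x+j)$ on $(0,1)$. With the convention $\psi_{\ell_0-1,k}:=\varphi_{\ell_0,k}$, the trial basis is $\{\psi_{\ell,k}\}_{(\ell,k)\in\mathcal J}$ with $\mathcal{J}$ consisting of $(\ell_0-1,k)$, $k\in\{0,\dots,2^{\ell_0}-1\}$ (scaling functions) and $(\ell,k)$, $\ell_0\le\ell<L$, $k\in\{0,\dots,2^\ell-1\}$ (wavelets). Normalization: $\widehat\psi_{\ell,k}=2^{-\ell}\psi_{\ell,k}$, and $\widehat\xi_q=(1+(2\pi q)^2)^{-1/2}\xi_q$ with $\xi_q(x)=e^{2\pi iqx}$. *)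

theory Defs
  imports "HOL-Analysis.Analysis"
begin

definition Dom :: "real set" where "Dom = {0<..<1}"

definition L2 :: "(real \<Rightarrow> real) \<Rightarrow> bool" where
  "L2 u \<longleftrightarrow> set_borel_measurable lborel Dom u \<and>
             set_integrable lborel Dom (\<lambda>x. (u x)\<^sup>2)"

definition L2norm_sq :: "(real \<Rightarrow> real) \<Rightarrow> real" where
  "L2norm_sq u = set_lebesgue_integral lborel Dom (\<lambda>x. (u x)\<^sup>2)"

definition smooth_periodic :: "(real \<Rightarrow> real) \<Rightarrow> bool" where
  "smooth_periodic f \<longleftrightarrow> (\<forall>k x. ((deriv ^^ k) f) differentiable (at x))
                        \<and> (\<forall>x. f (x + 1) = f x)"

text \<open>H1per u u': u lies in the H1-closure of (restrictions to (0,1) of) smooth 1-periodic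
  functions, and u' is its weak derivative (the L2-limit of the derivatives of the
  approximating sequence).\<close>
definition H1per :: "(real \<Rightarrow> real) \<Rightarrow> (real \<Rightarrow> real) \<Rightarrow> bool" where
  "H1per u u' \<longleftrightarrow> L2 u \<and> L2 u' \<and>
     (\<exists>f :: nat \<Rightarrow> real \<Rightarrow> real. (\<forall>n. smooth_periodic (f n)) \<and>
        (\<lambda>n. L2norm_sq (\<lambda>x. f n x - u x)) \<longlonglongrightarrow> 0 \<and>
        (\<lambda>n. L2norm_sq (\<lambda>x. deriv (f n) x - u' x)) \<longlonglongrightarrow> 0)"

definition H1norm_sq :: "(real \<Rightarrow> real) \<Rightarrow> (real \<Rightarrow> real) \<Rightarrow> real" where
  "H1norm_sq u u' = L2norm_sq u + L2norm_sq u'"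

definition H1semi_sq :: "(real \<Rightarrow> real) \<Rightarrow> real" where
  "H1semi_sq u' = L2norm_sq u'"

definition hat :: "real \<Rightarrow> real" where
  "hat x = max 0 (1 - \<bar>x\<bar>)"

definition wav :: "real \<Rightarrow> real" where
  "wav x = 1/4 * hat (2*x + 1) + 1/2 * hat (2*x) - 3/2 * hat (2*x - 1)
           + 1/2 * hat (2*x - 2) + 1/4 * hat (2*x - 3)"

definition periodize :: "(real \<Rightarrow> real) \<Rightarrow> real \<Rightarrow> real" where
  "periodize f x = infsum (\<lambda>j::int. f (x + real_of_int j)) UNIV"

text \<open>psi_{l,k} with the convention psi_{l0-1,k} = phi_{l0,k} (not yet periodized).\<close>
definition psi :: "nat \<Rightarrow> nat \<times> int \<Rightarrow> real \<Rightarrow> real" where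
  "psi l0 j x = (case j of (l, k) \<Rightarrow>
     if l = l0 - 1 then 2 powr (real l0 / 2) * hat (2 ^ l0 * x - real_of_int k)
     else 2 powr (real l / 2) * wav (2 ^ l * x - real_of_int k))"

definition J :: "nat \<Rightarrow> nat \<Rightarrow> (nat \<times> int) set" where
  "J l0 L = {(l0 - 1, k) | k. 0 \<le> k \<and> k < 2 ^ l0}
          \<union> {(l, k) | l k. l0 \<le> l \<and> l < L \<and> 0 \<le> k \<and> k < 2 ^ l}"

definition psihat :: "nat \<Rightarrow> nat \<times> int \<Rightarrow> real \<Rightarrow> complex" where
  "psihat l0 j x = complex_of_real (2 powr (- real (fst j)) * periodize (psi l0 j) x)"

definition xi :: "int \<Rightarrow> real \<Rightarrow> complex" where
  "xi q x = exp (2 * of_real pi * \<i> * of_int q * of_real x)"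

definition xihat :: "int \<Rightarrow> real \<Rightarrow> complex" where
  "xihat q x = complex_of_real ((1 + (2 * pi * real_of_int q)\<^sup>2) powr (-1/2)) * xi q x"

definition aform :: "(real \<Rightarrow> real) \<Rightarrow> (real \<Rightarrow> real) \<Rightarrow> (real \<Rightarrow> real)
                    \<Rightarrow> (real \<Rightarrow> complex) \<Rightarrow> (real \<Rightarrow> complex) \<Rightarrow> complex" where
  "aform \<eta> \<beta> \<rho> u v = set_lebesgue_integral lborel Dom (\<lambda>x.
       of_real (\<eta> x) * vector_derivative u (at x) * cnj (vector_derivative v (at x))
     + of_real (\<beta> x) * vector_derivative u (at x) * cnj (v x)
     + of_real (\<rho> x) * u x * cnj (v x))"

definition coherence :: "nat \<Rightarrow> nat \<Rightarrow> (real \<Rightarrow> real) \<Rightarrow> (real \<Rightarrow> real) \<Rightarrow> (real \<Rightarrow> real)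
                         \<Rightarrow> int \<Rightarrow> real" where
  "coherence l0 L \<eta> \<beta> \<rho> q =
     Sup ((\<lambda>j. (cmod (aform \<eta> \<beta> \<rho> (psihat l0 j) (xihat q)))\<^sup>2) ` J l0 L)"

end

theory Submission
  imports Defs
begin

text \<open>
  After the normalisation by 2^(-l), a periodised wavelet (or scaling function) of level l
  coincides on (0,1) with a sum P of fifteen hat functions of width 1/s, s = 2^(l+1), whose
  coefficients c_p satisfy (sum |c_p|)^2 <= 1800/s; its derivative is the step function D made of
  the slopes of these hats. Hence a(psihat, xihat q) is the H1-normalising factor of xi q times
  -2 pi i q (eta D, xi q) + (beta D, xi q) + (rho P, xi q).

  The rho-term is bounded by Cauchy-Schwarz, since the L2 norm of P is O(1/s). For smooth periodic f,
  the integral of f D against xi q is bounded in two ways: trivially by sup |f| sum |c_p|, which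
  is O(1/s) times the squared H1 norm of f after squaring, and, after integrating by parts against
  xi q on each piece of D, by O(s/q^2) times the same norm. As s <= 2^L, the smaller of the two is
  at most a constant times min (2^L/q^2) (1/|q|). For q = 0 one integrates by parts on all of
  (0,1) instead: periodicity removes the boundary terms, and the integral of f D equals minus that
  of f' P, which involves only the H1 seminorm. A density argument transfers all bounds from
  smooth periodic functions to H1per.
\<close>

lemma sq_le_mult_of_amgm_bound:
  fixes I A B :: real
  assumes A: "A \<ge> 0" and B: "B \<ge> 0" and I: "I \<ge> 0"
    and amgm: "\<And>t. t > 0 \<Longrightarrow> I \<le> (t * A + B / t) / 2"
  shows "I\<^sup>2 \<le> A * B"
proof (cases "A = 0 \<or> B = 0")
  case True
  have "I \<le> 0 + e" if e: "e > 0" for e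
  proof (cases "A = 0")
    case True
    have "I \<le> (B / ((B + 1) / e)) / 2" using amgm[of "(B + 1) / e"] e B True by simp
    also have "\<dots> \<le> e" using e B by (simp add: field_simps)
    finally show ?thesis by simp
  next
    case False
    with \<open>A = 0 \<or> B = 0\<close> have "B = 0" by simp
    have "I \<le> (e / (A + 1) * A) / 2" using amgm[of "e / (A + 1)"] e A \<open>B = 0\<close> by simp
    also have "\<dots> \<le> e" using e A by (simp add: field_simps)
    finally show ?thesis by simp
  qed
  then have "I \<le> 0" by (rule field_le_epsilon)
  with I have "I = 0" by simp
  then show ?thesis using A B by simp
next
  case False
  with A B have "A > 0" "B > 0" by auto
  define t where "t = sqrt (B / A)"
  have "t > 0" "t * A = sqrt (A * B)" "B / t = sqrt (A * B)"
    using \<open>A > 0\<close> \<open>B > 0\<close> by (simp_all add: t_def real_sqrt_divide real_sqrt_mult field_simps)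
  then have "I \<le> sqrt (A * B)" using amgm[of t] by simp
  then have "I\<^sup>2 \<le> (sqrt (A * B))\<^sup>2" using I by (simp add: power_mono)
  then show ?thesis using A B by simp
qed

lemma norm_add3_sq_le:
  fixes x y z :: "'a::real_normed_vector"
  shows "(norm (x + y + z))\<^sup>2 \<le> 3 * ((norm x)\<^sup>2 + (norm y)\<^sup>2 + (norm z)\<^sup>2)"
proof -
  have "norm (x + y + z) \<le> norm x + norm y + norm z"
    by (metis add_right_mono norm_triangle_ineq order_trans)
  then have "(norm (x + y + z))\<^sup>2 \<le> (norm x + norm y + norm z)\<^sup>2" by (simp add: power_mono)
  also have "\<dots> \<le> 3 * ((norm x)\<^sup>2 + (norm y)\<^sup>2 + (norm z)\<^sup>2)"
    using sum_squares_ge_zero[of "norm x - norm y" "norm y - norm z"]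
      zero_le_power2[of "norm x - norm z"]
    by (simp add: power2_eq_square algebra_simps)
  finally show ?thesis .
qed

text \<open>The two bounds cross at s = |q|; this is where the minimum in the theorem comes from.\<close>

lemma le_min_scale_if_le:
  fixes X A s S :: real and q :: int
  assumes s: "0 < s" "s \<le> S" and q: "q \<noteq> 0" and A: "A \<ge> 0"
    and small: "X \<le> A / s" and large: "X \<le> A * s / (real_of_int q)\<^sup>2"
  shows "X \<le> A * min (S / (real_of_int q)\<^sup>2) (1 / \<bar>real_of_int q\<bar>)"
proof -
  let ?q = "\<bar>real_of_int q\<bar>"
  have q2: "(real_of_int q)\<^sup>2 = ?q * ?q" and "?q > 0" using q by (simp_all add: power2_eq_square)
  have "X \<le> A * (S / (real_of_int q)\<^sup>2)"
    using large mult_left_mono[OF s(2) A] by (simp add: divide_right_mono order_trans)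
  moreover have "X \<le> A * (1 / ?q)"
  proof (cases "s \<ge> ?q")
    case True
    then show ?thesis using small A \<open>?q > 0\<close> by (simp add: divide_left_mono order_trans)
  next
    case False
    then have "A * s / (real_of_int q)\<^sup>2 \<le> A * ?q / (?q * ?q)"
      unfolding q2 using A by (intro divide_right_mono mult_left_mono) auto
    also have "\<dots> = A * (1 / ?q)"
      using nonzero_mult_divide_mult_cancel_right[of ?q A ?q] q
      by (simp only: times_divide_eq_right mult_1_right)
    finally show ?thesis by (rule order_trans[OF large])
  qed
  ultimately show ?thesis by (simp add: min_def)
qed

lemma inv_sq_le_min_scale:
  fixes q :: int and S :: real
  assumes q: "q \<noteq> 0" and S: "1 \<le> S"
  shows "1 / (real_of_int q)\<^sup>2 \<le> min (S / (real_of_int q)\<^sup>2) (1 / \<bar>real_of_int q\<bar>)"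
proof -
  have q1: "\<bar>real_of_int q\<bar> \<ge> 1" using q by linarith
  then have "\<bar>real_of_int q\<bar> * 1 \<le> \<bar>real_of_int q\<bar> * \<bar>real_of_int q\<bar>"
    by (intro mult_left_mono) auto
  then have "1 / (real_of_int q)\<^sup>2 \<le> 1 / \<bar>real_of_int q\<bar>"
    using q1 by (intro divide_left_mono) (auto simp: power2_eq_square)
  moreover have "1 / (real_of_int q)\<^sup>2 \<le> S / (real_of_int q)\<^sup>2"
    using S by (intro divide_right_mono) auto
  ultimately show ?thesis by simp
qed

section \<open>Square-integrable functions on the unit interval\<close>

lemma Dom_sets [measurable]: "Dom \<in> sets lborel"
  by (simp add: Dom_def)

lemma set_borel_measurable_Dom_iff:
  fixes f :: "real \<Rightarrow> 'a::real_normed_vector"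
  shows "set_borel_measurable lborel Dom f \<longleftrightarrow> f \<in> borel_measurable (restrict_space lborel Dom)"
  unfolding set_borel_measurable_def by (subst borel_measurable_restrict_space_iff) (auto simp: Dom_def)

lemma set_integrable_Dom_if_continuous:
  fixes f :: "real \<Rightarrow> 'a::{banach, second_countable_topology}"
  assumes "continuous_on {0..1} f"
  shows "set_integrable lborel Dom f"
  by (rule set_integrable_subset[OF borel_integrable_atLeastAtMost'[OF assms]]) (auto simp: Dom_def)

lemma set_integral_Dom_eq_integral:
  fixes f :: "real \<Rightarrow> 'a::euclidean_space"
  assumes "continuous_on {0..1} f"
  shows "(LINT x:Dom|lborel. f x) = integral {0..1} f"
  using set_borel_integral_eq_integral(2)[OF set_integrable_Dom_if_continuous[OF assms]]
  by (simp add: Dom_def integral_open_interval_real)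

lemma L2_if_continuous:
  assumes "continuous_on {0..1} f"
  shows "L2 f"
proof -
  have "continuous_on Dom f" using assms by (rule continuous_on_subset) (auto simp: Dom_def)
  then have "set_borel_measurable borel Dom f"
    by (intro set_measurable_continuous_on) (auto simp: Dom_def)
  then show ?thesis
    using assms unfolding L2_def set_borel_measurable_def
    by (auto intro!: set_integrable_Dom_if_continuous continuous_intros)
qed

lemma L2_measurable:
  "L2 u \<Longrightarrow> u \<in> borel_measurable (restrict_space lborel Dom)"
  by (simp add: L2_def set_borel_measurable_Dom_iff)

lemma L2norm_sq_nonneg: "L2norm_sq u \<ge> 0"
  by (auto simp: L2norm_sq_def set_lebesgue_integral_def intro!: integral_nonneg_AE)

lemma L2_diff:
  assumes "L2 u" "L2 v"
  shows "L2 (\<lambda>x. u x - v x)"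
  unfolding L2_def set_borel_measurable_Dom_iff
proof
  have [measurable]: "u \<in> borel_measurable (restrict_space lborel Dom)"
    "v \<in> borel_measurable (restrict_space lborel Dom)"
    using assms by (simp_all add: L2_measurable)
  show "(\<lambda>x. u x - v x) \<in> borel_measurable (restrict_space lborel Dom)" by measurable
  show "set_integrable lborel Dom (\<lambda>x. (u x - v x)\<^sup>2)"
  proof (rule set_integrable_bound[where f="\<lambda>x. 2 * (u x)\<^sup>2 + 2 * (v x)\<^sup>2"])
    show "set_integrable lborel Dom (\<lambda>x. 2 * (u x)\<^sup>2 + 2 * (v x)\<^sup>2)"
      using assms by (intro set_integral_add set_integrable_mult_right) (auto simp: L2_def)
    show "set_borel_measurable lborel Dom (\<lambda>x. (u x - v x)\<^sup>2)"
      unfolding set_borel_measurable_Dom_iff by measurable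
    have "(u x - v x)\<^sup>2 \<le> 2 * (u x)\<^sup>2 + 2 * (v x)\<^sup>2" for x
      using zero_le_power2[of "u x + v x"] by (simp add: power2_eq_square algebra_simps)
    then show "AE x in lborel. x \<in> Dom \<longrightarrow> norm ((u x - v x)\<^sup>2) \<le> norm (2 * (u x)\<^sup>2 + 2 * (v x)\<^sup>2)"
      by (intro AE_I2) simp
  qed
qed

lemma L2norm_sq_le_diff:
  assumes "L2 u" "L2 v"
  shows "L2norm_sq u \<le> 2 * L2norm_sq v + 2 * L2norm_sq (\<lambda>x. u x - v x)"
proof -
  have d: "L2 (\<lambda>x. u x - v x)" using assms by (rule L2_diff)
  have "L2norm_sq u \<le> (LINT x:Dom|lborel. 2 * (v x)\<^sup>2 + 2 * (u x - v x)\<^sup>2)"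
    unfolding L2norm_sq_def
  proof (rule set_integral_mono)
    show "set_integrable lborel Dom (\<lambda>x. (u x)\<^sup>2)" using assms by (simp add: L2_def)
    show "set_integrable lborel Dom (\<lambda>x. 2 * (v x)\<^sup>2 + 2 * (u x - v x)\<^sup>2)"
      using assms d by (intro set_integral_add set_integrable_mult_right) (auto simp: L2_def)
    show "(u x)\<^sup>2 \<le> 2 * (v x)\<^sup>2 + 2 * (u x - v x)\<^sup>2" for x
      using zero_le_power2[of "u x - 2 * v x"] by (simp add: power2_eq_square algebra_simps)
  qed
  also have "\<dots> = 2 * L2norm_sq v + 2 * L2norm_sq (\<lambda>x. u x - v x)"
    using assms d unfolding L2norm_sq_def L2_def by (simp add: set_integral_add)
  finally show ?thesis .
qed

lemma L2_abs_mult_integrable: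
  assumes "L2 u" "L2 v"
  shows "set_integrable lborel Dom (\<lambda>x. \<bar>u x * v x\<bar>)"
proof (rule set_integrable_bound[where f = "\<lambda>x. ((u x)\<^sup>2 + (v x)\<^sup>2) / 2"])
  show "set_integrable lborel Dom (\<lambda>x. ((u x)\<^sup>2 + (v x)\<^sup>2) / 2)"
    using assms by (intro set_integrable_divide set_integral_add) (auto simp: L2_def)
  have [measurable]: "u \<in> borel_measurable (restrict_space lborel Dom)"
    "v \<in> borel_measurable (restrict_space lborel Dom)"
    using assms by (simp_all add: L2_measurable)
  show "set_borel_measurable lborel Dom (\<lambda>x. \<bar>u x * v x\<bar>)"
    unfolding set_borel_measurable_Dom_iff by measurable
  show "AE x in lborel. x \<in> Dom \<longrightarrow> norm \<bar>u x * v x\<bar> \<le> norm (((u x)\<^sup>2 + (v x)\<^sup>2) / 2)"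
    using zero_le_power2[of "\<bar>u x\<bar> - \<bar>v x\<bar>" for x]
    by (intro AE_I2) (simp add: power2_eq_square abs_mult algebra_simps)
qed

lemma L2_Cauchy_Schwarz:
  assumes "L2 u" "L2 v"
  shows "(LINT x:Dom|lborel. \<bar>u x * v x\<bar>)\<^sup>2 \<le> L2norm_sq u * L2norm_sq v"
  unfolding L2norm_sq_def
proof (rule sq_le_mult_of_amgm_bound)
  show "0 \<le> (LINT x:Dom|lborel. (u x)\<^sup>2)" "0 \<le> (LINT x:Dom|lborel. (v x)\<^sup>2)"
    "0 \<le> (LINT x:Dom|lborel. \<bar>u x * v x\<bar>)"
    by (auto simp: set_lebesgue_integral_def intro!: integral_nonneg_AE)
  fix t :: real assume t: "t > 0"
  have iu: "set_integrable lborel Dom (\<lambda>x. (u x)\<^sup>2)" and iv: "set_integrable lborel Dom (\<lambda>x. (v x)\<^sup>2)"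
    using assms by (auto simp: L2_def)
  have "\<bar>u x * v x\<bar> \<le> (t * (u x)\<^sup>2 + (v x)\<^sup>2 / t) / 2" for x
  proof -
    have "2 * t * \<bar>u x * v x\<bar> \<le> t\<^sup>2 * (u x)\<^sup>2 + (v x)\<^sup>2"
      using zero_le_power2[of "t * \<bar>u x\<bar> - \<bar>v x\<bar>"]
      by (simp add: power2_eq_square abs_mult algebra_simps)
    then show ?thesis using t by (simp add: field_simps power2_eq_square)
  qed
  then have "(LINT x:Dom|lborel. \<bar>u x * v x\<bar>) \<le> (LINT x:Dom|lborel. (t * (u x)\<^sup>2 + (v x)\<^sup>2 / t) / 2)"
    using iu iv L2_abs_mult_integrable[OF assms] by (intro set_integral_mono) auto
  also have "\<dots> = (t * (LINT x:Dom|lborel. (u x)\<^sup>2) + (LINT x:Dom|lborel. (v x)\<^sup>2) / t) / 2"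
    using iu iv by (simp add: set_integral_add set_integral_divide_zero)
  finally show "(LINT x:Dom|lborel. \<bar>u x * v x\<bar>) \<le> \<dots>" .
qed

lemma L1_sq_le_L2norm_sq:
  assumes "L2 u"
  shows "(LINT x:Dom|lborel. \<bar>u x\<bar>)\<^sup>2 \<le> L2norm_sq u"
proof -
  have "L2norm_sq (\<lambda>_. 1) = 1"
    unfolding L2norm_sq_def by (subst set_integral_const) (auto simp: Dom_def)
  then show ?thesis
    using L2_Cauchy_Schwarz[OF assms L2_if_continuous[of "\<lambda>_. 1"]] by simp
qed

lemma integral_abs_sq_le_L2norm_sq:
  assumes "continuous_on {0..1} g"
  shows "(integral {0..1} (\<lambda>x. \<bar>g x\<bar>))\<^sup>2 \<le> L2norm_sq g"
  using L1_sq_le_L2norm_sq[OF L2_if_continuous[OF assms]]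
  by (simp add: set_integral_Dom_eq_integral assms continuous_on_rabs)

lemma L2_bounded_kernel_integrable:
  fixes W :: "real \<Rightarrow> complex"
  assumes u: "L2 u" and W: "W \<in> borel_measurable lborel" and bound: "\<And>x. x \<in> Dom \<Longrightarrow> cmod (W x) \<le> B"
  shows "set_integrable lborel Dom (\<lambda>x. of_real (u x) * W x)"
proof (rule set_integrable_bound[where f = "\<lambda>x. B * \<bar>u x * 1\<bar>"])
  show "set_integrable lborel Dom (\<lambda>x. B * \<bar>u x * 1\<bar>)"
    using L2_abs_mult_integrable[OF u L2_if_continuous[of "\<lambda>_. 1"]] by simp
  have [measurable]: "u \<in> borel_measurable (restrict_space lborel Dom)"
    using u by (rule L2_measurable)
  have [measurable]: "W \<in> borel_measurable (restrict_space lborel Dom)"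
    using W by (simp add: measurable_restrict_space1)
  show "set_borel_measurable lborel Dom (\<lambda>x. of_real (u x) * W x)"
    unfolding set_borel_measurable_Dom_iff by measurable
  show "AE x in lborel. x \<in> Dom \<longrightarrow> norm (of_real (u x) * W x) \<le> norm (B * \<bar>u x * 1\<bar>)"
  proof (intro AE_I2 impI)
    fix x assume "x \<in> Dom"
    moreover have "B \<ge> 0"
      using bound[of "1/2"] by (auto simp: Dom_def intro: order_trans[OF norm_ge_zero])
    ultimately show "norm (of_real (u x) * W x) \<le> norm (B * \<bar>u x * 1\<bar>)"
      using mult_left_mono[OF bound, of x "\<bar>u x\<bar>"] by (simp add: norm_mult abs_mult mult.commute)
  qed
qed

lemma L2_bounded_kernel_norm_le:
  fixes W :: "real \<Rightarrow> complex"
  assumes u: "L2 u" and W: "W \<in> borel_measurable lborel" and bound: "\<And>x. x \<in> Dom \<Longrightarrow> cmod (W x) \<le> B"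
  shows "cmod (LINT x:Dom|lborel. of_real (u x) * W x) \<le> B * sqrt (L2norm_sq u)"
proof -
  have B: "B \<ge> 0" using bound[of "1/2"] by (auto simp: Dom_def intro: order_trans[OF norm_ge_zero])
  have iu: "set_integrable lborel Dom (\<lambda>x. \<bar>u x\<bar>)"
    using L2_abs_mult_integrable[OF u L2_if_continuous[of "\<lambda>_. 1"]] by simp
  have i: "set_integrable lborel Dom (\<lambda>x. of_real (u x) * W x)"
    using u W bound by (rule L2_bounded_kernel_integrable)
  have "cmod (LINT x:Dom|lborel. of_real (u x) * W x) \<le> (LINT x:Dom|lborel. cmod (of_real (u x) * W x))"
    using i by (rule set_integral_norm_bound)
  also have "\<dots> \<le> (LINT x:Dom|lborel. B * \<bar>u x\<bar>)"
  proof (rule set_integral_mono)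
    show "set_integrable lborel Dom (\<lambda>x. cmod (of_real (u x) * W x))"
      using i by (rule set_integrable_norm)
    show "set_integrable lborel Dom (\<lambda>x. B * \<bar>u x\<bar>)" using iu by simp
    show "cmod (of_real (u x) * W x) \<le> B * \<bar>u x\<bar>" if "x \<in> Dom" for x
      using mult_left_mono[OF bound[OF that], of "\<bar>u x\<bar>"] by (simp add: norm_mult mult.commute)
  qed
  also have "\<dots> = B * (LINT x:Dom|lborel. \<bar>u x\<bar>)" by simp
  also have "\<dots> \<le> B * sqrt (L2norm_sq u)"
    using L1_sq_le_L2norm_sq[OF u] B by (intro mult_left_mono) (auto simp: real_le_rsqrt)
  finally show ?thesis .
qed

lemma L2_bounded_kernel_tendsto:
  fixes W :: "real \<Rightarrow> complex"
  assumes f: "\<And>n. L2 (f n)" and u: "L2 u" and lim: "(\<lambda>n. L2norm_sq (\<lambda>x. f n x - u x)) \<longlonglongrightarrow> 0"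
    and W: "W \<in> borel_measurable lborel" and bound: "\<And>x. x \<in> Dom \<Longrightarrow> cmod (W x) \<le> B"
  shows "(\<lambda>n. LINT x:Dom|lborel. of_real (f n x) * W x) \<longlonglongrightarrow> (LINT x:Dom|lborel. of_real (u x) * W x)"
proof -
  have dist: "norm ((LINT x:Dom|lborel. of_real (f n x) * W x)
        - (LINT x:Dom|lborel. of_real (u x) * W x))
        \<le> B * sqrt (L2norm_sq (\<lambda>x. f n x - u x))" for n
  proof -
    have "(LINT x:Dom|lborel. of_real (f n x) * W x) - (LINT x:Dom|lborel. of_real (u x) * W x)
          = (LINT x:Dom|lborel. of_real (f n x) * W x - of_real (u x) * W x)"
      using L2_bounded_kernel_integrable[OF f W bound] L2_bounded_kernel_integrable[OF u W bound]
      by (simp add: set_integral_diff)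
    also have "\<dots> = (LINT x:Dom|lborel. of_real (f n x - u x) * W x)"
      by (simp add: algebra_simps)
    finally show ?thesis
      using L2_bounded_kernel_norm_le[OF L2_diff[OF f u] W bound] by simp
  qed
  have g0: "(\<lambda>n. B * sqrt (L2norm_sq (\<lambda>x. f n x - u x))) \<longlonglongrightarrow> 0"
    using tendsto_mult_left[OF tendsto_real_sqrt[OF lim], of B] by simp
  then have "(\<lambda>n. (LINT x:Dom|lborel. of_real (f n x) * W x) - (LINT x:Dom|lborel. of_real (u x) * W x))
      \<longlonglongrightarrow> 0"
    using dist by (intro Lim_null_comparison[OF _ g0] always_eventually allI)
  then show ?thesis by (simp add: LIM_zero_iff)
qed

lemma smooth_periodic_has_real_derivative:
  assumes "smooth_periodic f"
  shows "(f has_real_derivative deriv f x) (at x)"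
proof -
  have "((deriv ^^ 0) f) differentiable (at x)" using assms unfolding smooth_periodic_def by blast
  then show ?thesis by (simp add: DERIV_deriv_iff_real_differentiable)
qed

lemma smooth_periodic_continuous_on: "smooth_periodic f \<Longrightarrow> continuous_on S f"
  by (meson DERIV_isCont continuous_at_imp_continuous_on smooth_periodic_has_real_derivative)

lemma smooth_periodic_continuous_on_deriv:
  assumes "smooth_periodic f"
  shows "continuous_on S (deriv f)"
proof -
  have "((deriv ^^ Suc 0) f) differentiable (at x)" for x
    using assms unfolding smooth_periodic_def by blast
  then show ?thesis
    by (simp add: continuous_at_imp_continuous_on differentiable_imp_continuous_within)
qed

lemma L2_smooth_periodic:
  assumes "smooth_periodic f"
  shows "L2 f" "L2 (deriv f)"
  using assms by (auto intro!: L2_if_continuous smooth_periodic_continuous_on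
      smooth_periodic_continuous_on_deriv)

lemma H1per_L2: "H1per u u' \<Longrightarrow> L2 u"
  by (simp add: H1per_def)

lemma H1per_kernel_bound:
  fixes W :: "real \<Rightarrow> complex"
  assumes H: "H1per u u'" and W: "W \<in> borel_measurable lborel"
    and bound: "\<And>x. x \<in> Dom \<Longrightarrow> cmod (W x) \<le> B" and K: "K1 \<ge> 0" "K2 \<ge> 0"
    and smooth: "\<And>f. smooth_periodic f \<Longrightarrow>
       (cmod (LINT x:Dom|lborel. of_real (f x) * W x))\<^sup>2 \<le> K1 * L2norm_sq f + K2 * L2norm_sq (deriv f)"
  shows "(cmod (LINT x:Dom|lborel. of_real (u x) * W x))\<^sup>2 \<le> 2 * (K1 * L2norm_sq u + K2 * L2norm_sq u')"
proof -
  obtain f where f: "\<And>n. smooth_periodic (f n)" and u: "L2 u" "L2 u'"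
    and lim: "(\<lambda>n. L2norm_sq (\<lambda>x. f n x - u x)) \<longlonglongrightarrow> 0"
      "(\<lambda>n. L2norm_sq (\<lambda>x. deriv (f n) x - u' x)) \<longlonglongrightarrow> 0"
    using H unfolding H1per_def by blast
  define R where "R n = K1 * (2 * L2norm_sq u + 2 * L2norm_sq (\<lambda>x. f n x - u x))
    + K2 * (2 * L2norm_sq u' + 2 * L2norm_sq (\<lambda>x. deriv (f n) x - u' x))" for n
  have lim_lhs: "(\<lambda>n. (cmod (LINT x:Dom|lborel. of_real (f n x) * W x))\<^sup>2)
      \<longlonglongrightarrow> (cmod (LINT x:Dom|lborel. of_real (u x) * W x))\<^sup>2"
    using L2_bounded_kernel_tendsto[OF L2_smooth_periodic(1)[OF f] u(1) lim(1) W bound]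
    by (intro tendsto_intros)
  have lim_R: "R \<longlonglongrightarrow> K1 * (2 * L2norm_sq u + 2 * 0) + K2 * (2 * L2norm_sq u' + 2 * 0)"
    unfolding R_def by (intro tendsto_intros lim)
  have le_R: "(cmod (LINT x:Dom|lborel. of_real (f n x) * W x))\<^sup>2 \<le> R n" for n
  proof -
    have "(cmod (LINT x:Dom|lborel. of_real (f n x) * W x))\<^sup>2
        \<le> K1 * L2norm_sq (f n) + K2 * L2norm_sq (deriv (f n))"
      by (rule smooth[OF f])
    also have "\<dots> \<le> R n"
      unfolding R_def using K L2_smooth_periodic[OF f] u
      by (intro add_mono mult_left_mono L2norm_sq_le_diff) auto
    finally show ?thesis .
  qed
  have "(cmod (LINT x:Dom|lborel. of_real (u x) * W x))\<^sup>2
      \<le> K1 * (2 * L2norm_sq u + 2 * 0) + K2 * (2 * L2norm_sq u' + 2 * 0)"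
    by (rule LIMSEQ_le[OF lim_lhs lim_R]) (use le_R in blast)
  then show ?thesis by (simp add: algebra_simps)
qed

section \<open>Fourier modes\<close>

lemma xi_has_vector_derivative:
  "(xi q has_vector_derivative (2 * of_real pi * \<i> * of_int q) * xi q x) (at x within S)"
proof -
  have "((\<lambda>z. exp (2 * of_real pi * \<i> * of_int q * z)) has_field_derivative
      (2 * of_real pi * \<i> * of_int q) * xi q x) (at (of_real x))"
    by (auto simp: xi_def intro!: derivative_eq_intros)
  from has_vector_derivative_real_field[OF this] show ?thesis
    by (simp add: xi_def[abs_def] has_vector_derivative_at_within)
qed

lemma continuous_on_xi [continuous_intros]: "continuous_on S (xi q)"
  unfolding xi_def[abs_def] by (intro continuous_intros)

lemma xi_measurable [measurable]: "xi q \<in> borel_measurable borel"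
  by (intro borel_measurable_continuous_onI continuous_on_xi)

lemma norm_xi [simp]: "cmod (xi q x) = 1"
  unfolding xi_def by (simp add: norm_exp_eq_Re)

lemma xi_0 [simp]: "xi 0 x = 1"
  by (simp add: xi_def)

lemma cnj_xi: "cnj (xi q x) = xi (- q) x"
  unfolding xi_def exp_cnj by simp

text \<open>The reciprocal of the H1 norm of xi q.\<close>

definition sobolev_weight :: "int \<Rightarrow> real" where
  "sobolev_weight q = (1 + (2 * pi * real_of_int q)\<^sup>2) powr (-1/2)"

lemma xihat_eq: "xihat q x = of_real (sobolev_weight q) * xi q x"
  by (simp add: xihat_def sobolev_weight_def)

lemma vector_derivative_xihat:
  "vector_derivative (xihat q) (at x)
    = of_real (sobolev_weight q) * (2 * of_real pi * \<i> * of_int q * xi q x)"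
proof -
  have "(xihat q has_vector_derivative
      of_real (sobolev_weight q) * (2 * of_real pi * \<i> * of_int q * xi q x)) (at x)"
    unfolding xihat_eq[abs_def] by (intro has_vector_derivative_mult_right xi_has_vector_derivative)
  then show ?thesis by (rule vector_derivative_at)
qed

lemma sobolev_weight_sq: "(sobolev_weight q)\<^sup>2 = 1 / (1 + (2 * pi * real_of_int q)\<^sup>2)"
proof -
  have "(sobolev_weight q)\<^sup>2 = (1 + (2 * pi * real_of_int q)\<^sup>2) powr (-1/2 + -1/2)"
    unfolding sobolev_weight_def power2_eq_square powr_add by simp
  then show ?thesis by (simp add: powr_minus_divide)
qed

lemma sobolev_weight_0 [simp]: "sobolev_weight 0 = 1"
  by (simp add: sobolev_weight_def)

lemma sobolev_weight_sq_mult_le: "(sobolev_weight q)\<^sup>2 * (2 * pi * real_of_int q)\<^sup>2 \<le> 1"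
  unfolding sobolev_weight_sq by (simp add: divide_le_eq add_pos_nonneg)

lemma sobolev_weight_sq_le:
  assumes "q \<noteq> 0"
  shows "(sobolev_weight q)\<^sup>2 \<le> 1 / (real_of_int q)\<^sup>2"
proof -
  have "(1::real) \<le> (2 * pi)\<^sup>2" using pi_gt3 by (intro one_le_power) auto
  then have "(real_of_int q)\<^sup>2 \<le> 1 + (2 * pi * real_of_int q)\<^sup>2"
    using mult_right_mono[OF _ zero_le_power2[of "real_of_int q"], of 1 "(2 * pi)\<^sup>2"]
    by (simp add: power_mult_distrib)
  then show ?thesis
    unfolding sobolev_weight_sq
    by (rule divide_left_mono) (use assms in \<open>auto simp: add_pos_nonneg\<close>)
qed

lemma abs_diff_le_integral_abs_deriv:
  assumes f: "\<And>x. (f has_real_derivative f' x) (at x)" and f': "continuous_on {0..1} f'"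
    and ab: "0 \<le> a" "a \<le> b" "b \<le> 1"
  shows "\<bar>f b - f a\<bar> \<le> integral {0..1} (\<lambda>y. \<bar>f' y\<bar>)"
proof -
  have "(f' has_integral (f b - f a)) {a..b}"
    using ab f by (intro fundamental_theorem_of_calculus)
      (auto simp: has_real_derivative_iff_has_vector_derivative[symmetric] intro: DERIV_subset)
  then have eq: "f b - f a = integral {a..b} f'" by (simp add: integral_unique)
  have cont: "continuous_on {a..b} f'" by (rule continuous_on_subset[OF f']) (use ab in auto)
  have "\<bar>integral {a..b} f'\<bar> \<le> integral {a..b} (\<lambda>y. \<bar>f' y\<bar>)"
    using integral_norm_bound_integral[of f' "{a..b}" "\<lambda>y. \<bar>f' y\<bar>"]
    by (simp add: integrable_continuous_interval cont continuous_on_rabs)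
  also have "\<dots> \<le> integral {0..1} (\<lambda>y. \<bar>f' y\<bar>)"
    using ab cont f' by (intro integral_subset_le integrable_continuous_interval continuous_intros) auto
  finally show ?thesis by (simp add: eq)
qed

lemma abs_le_integral_abs_add_integral_abs_deriv:
  assumes f: "\<And>x. (f has_real_derivative f' x) (at x)" and f': "continuous_on {0..1} f'"
    and x: "x \<in> {0..1}"
  shows "\<bar>f x\<bar> \<le> integral {0..1} (\<lambda>y. \<bar>f y\<bar>) + integral {0..1} (\<lambda>y. \<bar>f' y\<bar>)"
proof -
  define V where "V = integral {0..1} (\<lambda>y. \<bar>f' y\<bar>)"
  have cf: "continuous_on T f" for T
    using f by (meson DERIV_isCont continuous_at_imp_continuous_on)
  have "\<bar>f x\<bar> \<le> \<bar>f y\<bar> + V" if y: "y \<in> {0..1}" for y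
    using abs_diff_le_integral_abs_deriv[OF f f', of x y]
      abs_diff_le_integral_abs_deriv[OF f f', of y x]
      x y unfolding V_def by (cases "y \<le> x") auto
  then have "integral {0..1} (\<lambda>y::real. \<bar>f x\<bar>) \<le> integral {0..1} (\<lambda>y. \<bar>f y\<bar> + V)"
    by (intro integral_le integrable_continuous_interval continuous_intros cf) auto
  also have "\<dots> = integral {0..1} (\<lambda>y. \<bar>f y\<bar>) + V"
    by (subst integral_add) (auto intro!: integrable_continuous_interval continuous_intros cf)
  finally show ?thesis unfolding V_def by simp
qed

lemma sup_bound_by_H1_norm:
  assumes f: "\<And>x. (f has_real_derivative f' x) (at x)" and f': "continuous_on {0..1} f'"
  obtains S where "\<And>x. x \<in> {0..1} \<Longrightarrow> \<bar>f x\<bar> \<le> S" and "integral {0..1} (\<lambda>x. \<bar>f' x\<bar>) \<le> S"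
    and "S\<^sup>2 \<le> 2 * (L2norm_sq f + L2norm_sq f')"
proof
  define A where "A = integral {0..1} (\<lambda>x. \<bar>f x\<bar>)"
  define V where "V = integral {0..1} (\<lambda>x. \<bar>f' x\<bar>)"
  have "continuous_on {0..1} f"
    using f by (meson DERIV_isCont continuous_at_imp_continuous_on)
  then have A: "A\<^sup>2 \<le> L2norm_sq f" "A \<ge> 0" and V: "V\<^sup>2 \<le> L2norm_sq f'" "V \<ge> 0"
    unfolding A_def V_def using integral_abs_sq_le_L2norm_sq f'
    by (auto intro!: integral_nonneg integrable_continuous_interval continuous_intros)
  show "\<bar>f x\<bar> \<le> A + V" if "x \<in> {0..1}" for x
    unfolding A_def V_def using that by (rule abs_le_integral_abs_add_integral_abs_deriv[OF f f'])
  show "integral {0..1} (\<lambda>x. \<bar>f' x\<bar>) \<le> A + V" using A unfolding V_def by simp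
  have "(A + V)\<^sup>2 \<le> 2 * (A\<^sup>2 + V\<^sup>2)"
    using zero_le_power2[of "A - V"] by (simp add: power2_eq_square algebra_simps)
  then show "(A + V)\<^sup>2 \<le> 2 * (L2norm_sq f + L2norm_sq f')" using A V by simp
qed

lemma integral_mult_xi_by_parts:
  assumes f: "\<And>x. (f has_real_derivative f' x) (at x)" and f': "continuous_on {u..v} f'"
    and q: "q \<noteq> 0" and uv: "u \<le> v"
  shows "integral {u..v} (\<lambda>x. of_real (f x) * xi q x)
    = (of_real (f v) * xi q v - of_real (f u) * xi q u - integral {u..v} (\<lambda>x. of_real (f' x) * xi q x))
      / (2 * of_real pi * \<i> * of_int q)"
proof -
  define c where "c = 2 * of_real pi * \<i> * (of_int q :: complex)"
  have "c \<noteq> 0" using q by (simp add: c_def)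
  have "((\<lambda>x. of_real (f x) * xi q x) has_vector_derivative
      of_real (f' x) * xi q x + c * (of_real (f x) * xi q x)) (at x within {u..v})" for x
    using has_vector_derivative_mult[OF has_vector_derivative_of_real[OF DERIV_subset[OF f]]
        xi_has_vector_derivative]
    by (simp add: c_def algebra_simps)
  then have "((\<lambda>x. of_real (f' x) * xi q x + c * (of_real (f x) * xi q x)) has_integral
      of_real (f v) * xi q v - of_real (f u) * xi q u) {u..v}"
    using uv by (intro fundamental_theorem_of_calculus) auto
  moreover have "continuous_on {u..v} f"
    using f by (meson DERIV_isCont continuous_at_imp_continuous_on)
  then have "(\<lambda>x. of_real (f x) * xi q x) integrable_on {u..v}"
    "(\<lambda>x. of_real (f' x) * xi q x) integrable_on {u..v}"
    by (intro integrable_continuous_interval continuous_intros f'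
        continuous_on_compose2[OF continuous_on_of_real_id]; simp)+
  ultimately have "integral {u..v} (\<lambda>x. of_real (f' x) * xi q x)
      + c * integral {u..v} (\<lambda>x. of_real (f x) * xi q x)
      = of_real (f v) * xi q v - of_real (f u) * xi q u"
    by (subst integral_mult_right[symmetric], subst integral_add[symmetric])
       (auto intro: integrable_on_mult_right simp: integral_unique)
  then show ?thesis using \<open>c \<noteq> 0\<close> unfolding c_def[symmetric] by (simp add: field_simps)
qed

lemma norm_integral_mult_xi_le:
  assumes f: "\<And>x. (f has_real_derivative f' x) (at x)" and f': "continuous_on {0..1} f'"
    and q: "q \<noteq> 0" and uv: "0 \<le> u" "u \<le> v" "v \<le> 1"
    and S: "\<And>x. x \<in> {0..1} \<Longrightarrow> \<bar>f x\<bar> \<le> S"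
  shows "cmod (integral {u..v} (\<lambda>x. of_real (f x) * xi q x))
          \<le> (2 * S + integral {0..1} (\<lambda>x. \<bar>f' x\<bar>)) / (2 * pi * \<bar>real_of_int q\<bar>)"
proof -
  have cf': "continuous_on {u..v} f'" by (rule continuous_on_subset[OF f']) (use uv in auto)
  have "cmod (integral {u..v} (\<lambda>x. of_real (f' x) * xi q x)) \<le> integral {u..v} (\<lambda>x. \<bar>f' x\<bar>)"
    by (intro integral_norm_bound_integral integrable_continuous_interval continuous_intros cf'
        continuous_on_compose2[OF continuous_on_of_real_id cf']) (auto simp: norm_mult)
  also have "\<dots> \<le> integral {0..1} (\<lambda>x. \<bar>f' x\<bar>)"
    using uv by (intro integral_subset_le integrable_continuous_interval continuous_intros cf'
        continuous_on_subset[OF f']) auto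
  finally have "cmod (integral {u..v} (\<lambda>x. of_real (f' x) * xi q x)) \<le> integral {0..1} (\<lambda>x. \<bar>f' x\<bar>)" .
  moreover have "cmod (of_real (f v) * xi q v) \<le> S" "cmod (of_real (f u) * xi q u) \<le> S"
    using S[of u] S[of v] uv by (simp_all add: norm_mult)
  ultimately have "cmod (of_real (f v) * xi q v - of_real (f u) * xi q u
      - integral {u..v} (\<lambda>x. of_real (f' x) * xi q x)) \<le> 2 * S + integral {0..1} (\<lambda>x. \<bar>f' x\<bar>)"
    using norm_triangle_ineq4[of "of_real (f v) * xi q v - of_real (f u) * xi q u"
        "integral {u..v} (\<lambda>x. of_real (f' x) * xi q x)"]
      norm_triangle_ineq4[of "of_real (f v) * xi q v" "of_real (f u) * xi q u"] by linarith
  then show ?thesis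
    unfolding integral_mult_xi_by_parts[OF f cf' q uv(2)] using q
    by (simp add: norm_divide norm_mult divide_right_mono)
qed

lemma norm_integral_clamped_mult_xi_le:
  assumes f: "\<And>x. (f has_real_derivative f' x) (at x)" and f': "continuous_on {0..1} f'"
    and q: "q \<noteq> 0" and S: "\<And>x. x \<in> {0..1} \<Longrightarrow> \<bar>f x\<bar> \<le> S" and \<alpha>\<beta>: "\<alpha> \<le> \<beta>"
  shows "cmod (integral {max \<alpha> 0..min \<beta> 1} (\<lambda>x. of_real (f x) * xi q x))
          \<le> (2 * S + integral {0..1} (\<lambda>x. \<bar>f' x\<bar>)) / (2 * pi * \<bar>real_of_int q\<bar>)"
    and "cmod (integral {max \<alpha> 0..min \<beta> 1} (\<lambda>x. of_real (f x) * xi q x)) \<le> (\<beta> - \<alpha>) * S"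
proof -
  let ?u = "max \<alpha> 0" and ?v = "min \<beta> 1"
  have S0: "S \<ge> 0" using S[of 0] by simp
  have V0: "integral {0..1} (\<lambda>x. \<bar>f' x\<bar>) \<ge> 0"
    by (rule integral_nonneg) (auto intro!: integrable_continuous_interval continuous_intros f')
  have "cmod (integral {?u..?v} (\<lambda>x. of_real (f x) * xi q x))
          \<le> (2 * S + integral {0..1} (\<lambda>x. \<bar>f' x\<bar>)) / (2 * pi * \<bar>real_of_int q\<bar>)
      \<and> cmod (integral {?u..?v} (\<lambda>x. of_real (f x) * xi q x)) \<le> (\<beta> - \<alpha>) * S"
  proof (cases "?u \<le> ?v")
    case False
    then show ?thesis using S0 V0 \<alpha>\<beta> by auto
  next
    case True
    have "cmod (integral {?u..?v} (\<lambda>x. of_real (f x) * xi q x)) \<le> integral {?u..?v} (\<lambda>x. S)"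
    proof (rule integral_norm_bound_integral)
      have "continuous_on {?u..?v} f"
        using f by (meson DERIV_isCont continuous_at_imp_continuous_on)
      then show "(\<lambda>x. of_real (f x) * xi q x) integrable_on {?u..?v}"
        by (intro integrable_continuous_interval continuous_intros
            continuous_on_compose2[OF continuous_on_of_real_id]) auto
      show "cmod (of_real (f x) * xi q x) \<le> S" if "x \<in> {?u..?v}" for x
        using S[of x] that by (auto simp: norm_mult)
    qed auto
    also have "\<dots> \<le> (\<beta> - \<alpha>) * S" using True S0 by (simp add: mult_right_mono)
    finally show ?thesis
      using True norm_integral_mult_xi_le[OF f f' q _ _ _ S] by auto
  qed
  then show "cmod (integral {?u..?v} (\<lambda>x. of_real (f x) * xi q x))
          \<le> (2 * S + integral {0..1} (\<lambda>x. \<bar>f' x\<bar>)) / (2 * pi * \<bar>real_of_int q\<bar>)"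
    and "cmod (integral {?u..?v} (\<lambda>x. of_real (f x) * xi q x)) \<le> (\<beta> - \<alpha>) * S"
    by auto
qed

section \<open>The hat function\<close>

definition hat_slope :: "real \<Rightarrow> real" where
  "hat_slope y = indicator {-1<..<0} y - indicator {0<..<1} y"

lemma continuous_on_hat [continuous_intros]: "continuous_on S hat"
  unfolding hat_def[abs_def] by (intro continuous_intros)

lemma hat_nonneg: "0 \<le> hat y"
  and hat_le_1: "hat y \<le> 1"
  by (auto simp: hat_def)

lemma hat_eq_0: "\<bar>y\<bar> \<ge> 1 \<Longrightarrow> hat y = 0"
  by (auto simp: hat_def)

lemma hat_le_indicator:
  assumes s: "s > 0"
  shows "hat (s * x - a) \<le> indicator {(a - 1) / s<..<(a + 1) / s} x"
proof (cases "x \<in> {(a - 1) / s<..<(a + 1) / s}")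
  case True
  then show ?thesis using hat_le_1 by simp
next
  case False
  then have "\<bar>s * x - a\<bar> \<ge> 1" using s by (auto simp: field_simps)
  then show ?thesis using False by (simp add: hat_eq_0)
qed

lemma hat_has_real_derivative:
  assumes "y \<notin> {-1, 0, 1}"
  shows "(hat has_real_derivative hat_slope y) (at y)"
proof -
  consider "y < -1" | "-1 < y" "y < 0" | "0 < y" "y < 1" | "1 < y" using assms by force
  then show ?thesis
  proof cases
    case 1
    show ?thesis
      by (rule has_field_derivative_transform_within_open[of "\<lambda>_. 0" _ _ "{..< -1}"])
         (use 1 in \<open>auto simp: hat_slope_def hat_def\<close>)
  next
    case 2
    show ?thesis
      by (rule has_field_derivative_transform_within_open[of "\<lambda>x. 1 + x" _ _ "{-1<..<0}"])
         (use 2 in \<open>auto simp: hat_slope_def hat_def intro!: derivative_eq_intros\<close>)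
  next
    case 3
    show ?thesis
      by (rule has_field_derivative_transform_within_open[of "\<lambda>x. 1 - x" _ _ "{0<..<1}"])
         (use 3 in \<open>auto simp: hat_slope_def hat_def intro!: derivative_eq_intros\<close>)
  next
    case 4
    show ?thesis
      by (rule has_field_derivative_transform_within_open[of "\<lambda>_. 0" _ _ "{1<..}"])
         (use 4 in \<open>auto simp: hat_slope_def hat_def\<close>)
  qed
qed

lemma abs_hat_slope_le: "\<bar>hat_slope y\<bar> \<le> 1"
  by (simp add: hat_slope_def indicator_def)

lemma hat_slope_measurable [measurable]: "hat_slope \<in> borel_measurable borel"
  unfolding hat_slope_def[abs_def] by measurable

lemma hat_slope_affine:
  assumes "s > 0"
  shows "hat_slope (s * x - a)
    = indicator {(a - 1) / s<..<a / s} x - indicator {a / s<..<(a + 1) / s} x"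
  using assms by (auto simp: hat_slope_def indicator_def field_simps)

lemma has_integral_indicator_scaleR:
  fixes g :: "real \<Rightarrow> 'a::banach"
  assumes g: "continuous_on {0..1} g"
  shows "((\<lambda>x. indicator {\<alpha><..<\<beta>} x *\<^sub>R g x) has_integral integral {max \<alpha> 0..min \<beta> 1} g) {0..1}"
proof -
  have "g integrable_on {max \<alpha> 0..min \<beta> 1}"
    by (rule integrable_continuous_interval, rule continuous_on_subset[OF g]) auto
  then have h: "(g has_integral integral {max \<alpha> 0..min \<beta> 1} g) {max \<alpha> 0..min \<beta> 1}"
    by (rule integrable_integral)
  have "negligible {\<alpha>, \<beta>}" by simp
  then have "(g has_integral integral {max \<alpha> 0..min \<beta> 1} g) ({\<alpha><..<\<beta>} \<inter> {0..1})"
    by (rule has_integral_spike_set_eq[THEN iffD1, OF negligible_subset negligible_subset h]) auto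
  then have "((\<lambda>x. if x \<in> {\<alpha><..<\<beta>} then g x else 0) has_integral integral {max \<alpha> 0..min \<beta> 1} g) {0..1}"
    by (subst has_integral_restrict_Int)
  then show ?thesis
    by (rule has_integral_eq[rotated]) (auto simp: indicator_def)
qed

lemma hat_slope_has_integral:
  fixes g :: "real \<Rightarrow> 'a::banach"
  assumes s: "s > 0" and g: "continuous_on {0..1} g"
  shows "((\<lambda>x. hat_slope (s * x - a) *\<^sub>R g x) has_integral
          integral {max ((a - 1) / s) 0..min (a / s) 1} g
          - integral {max (a / s) 0..min ((a + 1) / s) 1} g)
         {0..1}"
  using has_integral_diff[OF has_integral_indicator_scaleR[OF g] has_integral_indicator_scaleR[OF g]]
  by (rule has_integral_eq[rotated]) (simp add: hat_slope_affine[OF s] scaleR_diff_left)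

lemma hat_integration_by_parts:
  assumes s: "s > 0" and f: "\<And>x. (f has_real_derivative f' x) (at x)" and f': "continuous_on {0..1} f'"
  shows "((\<lambda>x. f x * (s * hat_slope (s * x - a))) has_integral
          f 1 * hat (s - a) - f 0 * hat (- a) - integral {0..1} (\<lambda>x. f' x * hat (s * x - a))) {0..1}"
proof -
  define K where "K = {(a - 1) / s, a / s, (a + 1) / s}"
  have der: "((\<lambda>x. f x * hat (s * x - a)) has_vector_derivative
               f x * (hat_slope (s * x - a) * s) + f' x * hat (s * x - a)) (at x)"
    if x: "x \<in> {0<..<1} - K" for x
  proof -
    have "s * x - a \<notin> {-1, 0, 1}"
      using x s by (auto simp: K_def field_simps)
    then have "((\<lambda>x. hat (s * x - a)) has_real_derivative hat_slope (s * x - a) * s) (at x)"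
      by (intro DERIV_chain2[OF hat_has_real_derivative]) (auto intro!: derivative_eq_intros)
    from DERIV_mult'[OF f this] show ?thesis
      by (simp add: has_real_derivative_iff_has_vector_derivative algebra_simps)
  qed
  have cont: "continuous_on {0..1} (\<lambda>x. f x * hat (s * x - a))"
    using f by (intro continuous_intros continuous_on_compose2[OF continuous_on_hat]
        continuous_at_imp_continuous_on) (auto intro: DERIV_isCont)
  have ftc: "((\<lambda>x. f x * (hat_slope (s * x - a) * s) + f' x * hat (s * x - a)) has_integral
           f 1 * hat (s * 1 - a) - f 0 * hat (s * 0 - a)) {0..1}"
    by (rule fundamental_theorem_of_calculus_interior_strong[of K, OF _ _ der cont])
       (simp_all add: K_def)
  have "((\<lambda>x. f' x * hat (s * x - a)) has_integral integral {0..1} (\<lambda>x. f' x * hat (s * x - a))) {0..1}"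
    by (intro integrable_integral integrable_continuous_interval continuous_intros f'
        continuous_on_compose2[OF continuous_on_hat]) auto
  from has_integral_diff[OF ftc this]
  have "((\<lambda>x. f x * (s * hat_slope (s * x - a))) has_integral
          f 1 * hat (s * 1 - a) - f 0 * hat (s * 0 - a) - integral {0..1} (\<lambda>x. f' x * hat (s * x - a)))
         {0..1}"
    by (rule has_integral_eq[rotated]) (simp add: algebra_simps)
  then show ?thesis by simp
qed

lemma norm_integral_hat_slope_mult_xi_le:
  assumes s: "s > 0" and f: "\<And>x. (f has_real_derivative f' x) (at x)" and f': "continuous_on {0..1} f'"
    and q: "q \<noteq> 0" and S: "\<And>x. x \<in> {0..1} \<Longrightarrow> \<bar>f x\<bar> \<le> S"
  shows "cmod (integral {0..1} (\<lambda>x. hat_slope (s * x - a) *\<^sub>R (of_real (f x) * xi q x)))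
          \<le> 2 * ((2 * S + integral {0..1} (\<lambda>x. \<bar>f' x\<bar>)) / (2 * pi * \<bar>real_of_int q\<bar>))"
    and "cmod (integral {0..1} (\<lambda>x. hat_slope (s * x - a) *\<^sub>R (of_real (f x) * xi q x))) \<le> 2 * S / s"
proof -
  let ?g = "\<lambda>x. of_real (f x) * xi q x"
  have "continuous_on {0..1} ?g"
    using f by (intro continuous_intros continuous_on_compose2[OF continuous_on_of_real_id]
        continuous_at_imp_continuous_on) (auto intro: DERIV_isCont)
  then have e: "integral {0..1} (\<lambda>x. hat_slope (s * x - a) *\<^sub>R ?g x)
      = integral {max ((a - 1) / s) 0..min (a / s) 1} ?g
        - integral {max (a / s) 0..min ((a + 1) / s) 1} ?g"
    by (intro integral_unique hat_slope_has_integral[OF s])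
  have le: "(a - 1) / s \<le> a / s" "a / s \<le> (a + 1) / s" using s by (auto simp: divide_right_mono)
  have len: "a / s - (a - 1) / s = 1 / s" "(a + 1) / s - a / s = 1 / s"
    using s by (auto simp: field_simps)
  let ?I1 = "integral {max ((a - 1) / s) 0..min (a / s) 1} ?g"
  let ?I2 = "integral {max (a / s) 0..min ((a + 1) / s) 1} ?g"
  have tri: "cmod (?I1 - ?I2) \<le> cmod ?I1 + cmod ?I2" by (rule norm_triangle_ineq4)
  then show "cmod (integral {0..1} (\<lambda>x. hat_slope (s * x - a) *\<^sub>R ?g x))
          \<le> 2 * ((2 * S + integral {0..1} (\<lambda>x. \<bar>f' x\<bar>)) / (2 * pi * \<bar>real_of_int q\<bar>))"
    using norm_integral_clamped_mult_xi_le(1)[OF f f' q S le(1)]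
      norm_integral_clamped_mult_xi_le(1)[OF f f' q S le(2)] unfolding e by linarith
  show "cmod (integral {0..1} (\<lambda>x. hat_slope (s * x - a) *\<^sub>R ?g x)) \<le> 2 * S / s"
    using tri norm_integral_clamped_mult_xi_le(2)[OF f f' q S le(1)]
      norm_integral_clamped_mult_xi_le(2)[OF f f' q S le(2)] unfolding e len by simp
qed

section \<open>Finite sums of scaled hat functions\<close>

definition hat_sum :: "'i set \<Rightarrow> ('i \<Rightarrow> real) \<Rightarrow> ('i \<Rightarrow> real) \<Rightarrow> real \<Rightarrow> real \<Rightarrow> real" where
  "hat_sum I c a s x = (\<Sum>p\<in>I. c p * hat (s * x - a p))"

definition hat_sum_slope :: "'i set \<Rightarrow> ('i \<Rightarrow> real) \<Rightarrow> ('i \<Rightarrow> real) \<Rightarrow> real \<Rightarrow> real \<Rightarrow> real" where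
  "hat_sum_slope I c a s x = (\<Sum>p\<in>I. c p * (s * hat_slope (s * x - a p)))"

lemma continuous_on_hat_sum [continuous_intros]: "continuous_on S (hat_sum I c a s)"
  unfolding hat_sum_def[abs_def]
  by (intro continuous_intros continuous_on_compose2[OF continuous_on_hat]) auto

lemma hat_sum_measurable [measurable]: "hat_sum I c a s \<in> borel_measurable borel"
  by (intro borel_measurable_continuous_onI continuous_on_hat_sum)

lemma hat_sum_slope_measurable [measurable]: "hat_sum_slope I c a s \<in> borel_measurable borel"
  unfolding hat_sum_slope_def[abs_def] by measurable

lemma abs_hat_sum_le: "\<bar>hat_sum I c a s x\<bar> \<le> (\<Sum>p\<in>I. \<bar>c p\<bar>)"
  unfolding hat_sum_def
  by (rule order_trans[OF sum_abs sum_mono])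
     (use hat_nonneg hat_le_1 in \<open>auto simp: abs_mult intro: mult_left_le\<close>)

lemma abs_hat_sum_slope_le:
  assumes "s \<ge> 0"
  shows "\<bar>hat_sum_slope I c a s x\<bar> \<le> (\<Sum>p\<in>I. \<bar>c p\<bar>) * s"
  unfolding hat_sum_slope_def sum_distrib_right
proof (rule order_trans[OF sum_abs sum_mono])
  fix p
  show "\<bar>c p * (s * hat_slope (s * x - a p))\<bar> \<le> \<bar>c p\<bar> * s"
    using mult_left_mono[OF mult_left_le[OF abs_hat_slope_le assms], of "\<bar>c p\<bar>"] assms
    by (simp add: abs_mult)
qed

lemma norm_hat_sum_xi_le: "cmod (of_real (hat_sum I c a s x) * xi q x) \<le> (\<Sum>p\<in>I. \<bar>c p\<bar>)"
  using abs_hat_sum_le by (simp add: norm_mult)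

lemma norm_hat_sum_slope_xi_le:
  assumes "s \<ge> 0"
  shows "cmod (of_real (hat_sum_slope I c a s x) * xi q x) \<le> (\<Sum>p\<in>I. \<bar>c p\<bar>) * s"
  using abs_hat_sum_slope_le[OF assms] by (simp add: norm_mult)

lemma hat_sum_has_real_derivative:
  assumes "\<And>p. p \<in> I \<Longrightarrow> s * x - a p \<notin> {-1, 0, 1}"
  shows "(hat_sum I c a s has_real_derivative hat_sum_slope I c a s x) (at x)"
  unfolding hat_sum_def[abs_def] hat_sum_slope_def
proof (rule DERIV_sum)
  fix p assume "p \<in> I"
  then have "((\<lambda>x. hat (s * x - a p)) has_real_derivative hat_slope (s * x - a p) * s) (at x)"
    using assms by (intro DERIV_chain2[OF hat_has_real_derivative]) (auto intro!: derivative_eq_intros)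
  then show "((\<lambda>x. c p * hat (s * x - a p)) has_real_derivative
      c p * (s * hat_slope (s * x - a p))) (at x)"
    by (rule DERIV_cmult[THEN DERIV_cong]) simp
qed

lemma integral_indicator_le:
  assumes "\<alpha> \<le> \<beta>"
  shows "integral {0..1} (indicator {\<alpha><..<\<beta>} :: real \<Rightarrow> real) \<le> \<beta> - \<alpha>"
proof -
  have "integral {0..1} (\<lambda>x. indicator {\<alpha><..<\<beta>} x *\<^sub>R (1::real))
      = integral {max \<alpha> 0..min \<beta> 1} (\<lambda>_. 1::real)"
    by (intro integral_unique has_integral_indicator_scaleR) simp
  then show ?thesis using assms by (auto simp: content_real_if)
qed

lemma L2norm_sq_hat_sum_le:
  assumes I: "finite I" and s: "s > 0"
  shows "L2norm_sq (hat_sum I c a s) \<le> 2 * (\<Sum>p\<in>I. \<bar>c p\<bar>)\<^sup>2 / s"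
proof -
  let ?P = "hat_sum I c a s" and ?\<sigma> = "\<Sum>p\<in>I. \<bar>c p\<bar>"
  let ?ind = "\<lambda>p x. indicator {(a p - 1) / s<..<(a p + 1) / s} x :: real"
  have "(?P x)\<^sup>2 \<le> ?\<sigma> * (\<Sum>p\<in>I. \<bar>c p\<bar> * ?ind p x)" for x
  proof -
    have "\<bar>?P x\<bar> \<le> (\<Sum>p\<in>I. \<bar>c p\<bar> * ?ind p x)"
      unfolding hat_sum_def
      by (rule order_trans[OF sum_abs sum_mono])
         (use hat_nonneg hat_le_indicator[OF s] in \<open>auto simp: abs_mult intro: mult_left_mono\<close>)
    then have "\<bar>?P x\<bar> * \<bar>?P x\<bar> \<le> ?\<sigma> * (\<Sum>p\<in>I. \<bar>c p\<bar> * ?ind p x)"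
      using abs_hat_sum_le by (intro mult_mono) auto
    then show ?thesis by (simp add: power2_eq_square)
  qed
  moreover have "((\<lambda>x. ?\<sigma> * (\<Sum>p\<in>I. \<bar>c p\<bar> * ?ind p x)) has_integral
        ?\<sigma> * (\<Sum>p\<in>I. \<bar>c p\<bar> * integral {0..1} (?ind p))) {0..1}"
    using has_integral_indicator_scaleR[of "\<lambda>_. 1::real"]
    by (intro has_integral_mult_right has_integral_sum I)
       (auto intro: integrable_integral has_integral_integrable)
  ultimately have "integral {0..1} (\<lambda>x. (?P x)\<^sup>2) \<le> ?\<sigma> * (\<Sum>p\<in>I. \<bar>c p\<bar> * integral {0..1} (?ind p))"
    by (intro has_integral_le[OF integrable_integral])
       (auto intro!: integrable_continuous_interval continuous_intros)
  also have "\<dots> \<le> ?\<sigma> * (\<Sum>p\<in>I. \<bar>c p\<bar> * (2 / s))"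
  proof (intro mult_left_mono sum_mono sum_nonneg)
    fix p
    have "integral {0..1} (?ind p) \<le> (a p + 1) / s - (a p - 1) / s"
      using s by (intro integral_indicator_le divide_right_mono) auto
    then show "integral {0..1} (?ind p) \<le> 2 / s"
      using s by (simp add: field_simps)
  qed auto
  also have "\<dots> = 2 * ?\<sigma>\<^sup>2 / s"
    by (simp add: sum_divide_distrib[symmetric] sum_distrib_right[symmetric] power2_eq_square)
  finally show ?thesis
    unfolding L2norm_sq_def by (simp add: set_integral_Dom_eq_integral continuous_intros)
qed

lemma set_integral_hat_sum_slope_eq_sum:
  assumes I: "finite I" and s: "s > 0" and f: "continuous_on {0..1} f"
  shows "(LINT x:Dom|lborel. of_real (f x) * (of_real (hat_sum_slope I c a s x) * xi q x))
    = (\<Sum>p\<in>I. of_real (c p * s)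
        * integral {0..1} (\<lambda>x. hat_slope (s * x - a p) *\<^sub>R (of_real (f x) * xi q x)))"
proof -
  let ?g = "\<lambda>x. of_real (f x) * xi q x"
  have int:
    "set_integrable lborel Dom (\<lambda>x. of_real (f x) * (of_real (hat_sum_slope I c a s x) * xi q x))"
    by (intro L2_bounded_kernel_integrable[OF _ _ norm_hat_sum_slope_xi_le[OF less_imp_le[OF s]]]
        L2_if_continuous f) auto
  have "continuous_on {0..1} ?g"
    by (intro continuous_intros continuous_on_compose2[OF continuous_on_of_real_id f]) auto
  then have "((\<lambda>x. \<Sum>p\<in>I. of_real (c p * s) * (hat_slope (s * x - a p) *\<^sub>R ?g x)) has_integral
      (\<Sum>p\<in>I. of_real (c p * s) * integral {0..1} (\<lambda>x. hat_slope (s * x - a p) *\<^sub>R ?g x))) {0..1}"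
    by (intro has_integral_sum I has_integral_mult_right integrable_integral
        has_integral_integrable[OF hat_slope_has_integral[OF s]])
  then have "((\<lambda>x. of_real (f x) * (of_real (hat_sum_slope I c a s x) * xi q x)) has_integral
      (\<Sum>p\<in>I. of_real (c p * s) * integral {0..1} (\<lambda>x. hat_slope (s * x - a p) *\<^sub>R ?g x))) {0..1}"
    by (rule has_integral_eq[rotated])
       (simp add: hat_sum_slope_def of_real_sum sum_distrib_left sum_distrib_right
         scaleR_conv_of_real mult_ac)
  then have "integral {0..1} (\<lambda>x. of_real (f x) * (of_real (hat_sum_slope I c a s x) * xi q x))
      = (\<Sum>p\<in>I. of_real (c p * s) * integral {0..1} (\<lambda>x. hat_slope (s * x - a p) *\<^sub>R ?g x))"
    by (rule integral_unique)
  then show ?thesis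
    using set_borel_integral_eq_integral(2)[OF int] by (simp add: Dom_def integral_open_interval_real)
qed

text \<open>
  The first bound ignores the oscillation of xi q; the second integrates by parts against xi q
  on each piece of the step function and gains the factor 1/|q|.
\<close>

lemma norm_set_integral_hat_sum_slope_xi_le:
  assumes I: "finite I" and s: "s > 0" and f: "\<And>x. (f has_real_derivative f' x) (at x)"
    and f': "continuous_on {0..1} f'" and q: "q \<noteq> 0" and S: "\<And>x. x \<in> {0..1} \<Longrightarrow> \<bar>f x\<bar> \<le> S"
  shows "cmod (LINT x:Dom|lborel. of_real (f x) * (of_real (hat_sum_slope I c a s x) * xi q x))
      \<le> 2 * (\<Sum>p\<in>I. \<bar>c p\<bar>) * S"
    and "cmod (LINT x:Dom|lborel. of_real (f x) * (of_real (hat_sum_slope I c a s x) * xi q x))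
      \<le> 2 * (\<Sum>p\<in>I. \<bar>c p\<bar>) * s * ((2 * S + integral {0..1} (\<lambda>x. \<bar>f' x\<bar>)) / (2 * pi * \<bar>real_of_int q\<bar>))"
proof -
  let ?A = "\<lambda>p. integral {0..1} (\<lambda>x. hat_slope (s * x - a p) *\<^sub>R (of_real (f x) * xi q x))"
  have "continuous_on {0..1} f"
    using f by (meson DERIV_isCont continuous_at_imp_continuous_on)
  then have eq: "(LINT x:Dom|lborel. of_real (f x) * (of_real (hat_sum_slope I c a s x) * xi q x))
      = (\<Sum>p\<in>I. of_real (c p * s) * ?A p)"
    by (rule set_integral_hat_sum_slope_eq_sum[OF I s])
  have sum_le: "cmod (\<Sum>p\<in>I. of_real (c p * s) * ?A p) \<le> (\<Sum>p\<in>I. \<bar>c p\<bar>) * s * b"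
    if "\<And>p. cmod (?A p) \<le> b" for b
  proof -
    have "cmod (\<Sum>p\<in>I. of_real (c p * s) * ?A p) \<le> (\<Sum>p\<in>I. \<bar>c p\<bar> * s * cmod (?A p))"
      using s by (intro order_trans[OF norm_sum sum_mono]) (simp add: norm_mult abs_mult)
    also have "\<dots> \<le> (\<Sum>p\<in>I. \<bar>c p\<bar> * s * b)"
      using s by (intro sum_mono mult_left_mono that) auto
    finally show ?thesis by (simp add: sum_distrib_right)
  qed
  have "cmod (\<Sum>p\<in>I. of_real (c p * s) * ?A p) \<le> (\<Sum>p\<in>I. \<bar>c p\<bar>) * s * (2 * S / s)"
    by (intro sum_le norm_integral_hat_slope_mult_xi_le(2)[OF s f f' q S])
  then show "cmod (LINT x:Dom|lborel. of_real (f x) * (of_real (hat_sum_slope I c a s x) * xi q x))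
      \<le> 2 * (\<Sum>p\<in>I. \<bar>c p\<bar>) * S"
    unfolding eq using s by simp
  show "cmod (LINT x:Dom|lborel. of_real (f x) * (of_real (hat_sum_slope I c a s x) * xi q x))
      \<le> 2 * (\<Sum>p\<in>I. \<bar>c p\<bar>) * s * ((2 * S + integral {0..1} (\<lambda>x. \<bar>f' x\<bar>)) / (2 * pi * \<bar>real_of_int q\<bar>))"
    unfolding eq using sum_le[OF norm_integral_hat_slope_mult_xi_le(1)[OF s f f' q S]]
    by (simp only: mult.assoc mult.left_commute[of 2])
qed

lemma sq_norm_set_integral_hat_sum_slope_xi_le:
  assumes I: "finite I" and s: "s > 0" and f: "\<And>x. (f has_real_derivative f' x) (at x)"
    and f': "continuous_on {0..1} f'" and q: "q \<noteq> 0"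
  shows "(cmod (LINT x:Dom|lborel. of_real (f x) * (of_real (hat_sum_slope I c a s x) * xi q x)))\<^sup>2
      \<le> 8 * (\<Sum>p\<in>I. \<bar>c p\<bar>)\<^sup>2 * (L2norm_sq f + L2norm_sq f')"
    and "(cmod (LINT x:Dom|lborel. of_real (f x) * (of_real (hat_sum_slope I c a s x) * xi q x)))\<^sup>2
      \<le> 72 * (\<Sum>p\<in>I. \<bar>c p\<bar>)\<^sup>2 * s\<^sup>2 / (2 * pi * real_of_int q)\<^sup>2 * (L2norm_sq f + L2norm_sq f')"
proof -
  let ?X = "cmod (LINT x:Dom|lborel. of_real (f x) * (of_real (hat_sum_slope I c a s x) * xi q x))"
  let ?\<sigma> = "\<Sum>p\<in>I. \<bar>c p\<bar>"
  obtain S where S: "\<And>x. x \<in> {0..1} \<Longrightarrow> \<bar>f x\<bar> \<le> S" and V: "integral {0..1} (\<lambda>x. \<bar>f' x\<bar>) \<le> S"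
    and S2: "S\<^sup>2 \<le> 2 * (L2norm_sq f + L2norm_sq f')"
    using sup_bound_by_H1_norm[OF f f'] by blast
  have \<sigma>: "?\<sigma> \<ge> 0" by (simp add: sum_nonneg)
  have "?X\<^sup>2 \<le> (2 * ?\<sigma> * S)\<^sup>2"
    using norm_set_integral_hat_sum_slope_xi_le(1)[OF I s f f' q S] by (intro power_mono) auto
  also have "\<dots> \<le> 4 * ?\<sigma>\<^sup>2 * (2 * (L2norm_sq f + L2norm_sq f'))"
    using S2 by (simp add: power_mult_distrib mult_left_mono)
  finally show "?X\<^sup>2 \<le> 8 * ?\<sigma>\<^sup>2 * (L2norm_sq f + L2norm_sq f')" by (simp add: algebra_simps)
  have "?X \<le> 2 * ?\<sigma> * s * ((2 * S + integral {0..1} (\<lambda>x. \<bar>f' x\<bar>)) / (2 * pi * \<bar>real_of_int q\<bar>))"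
    by (rule norm_set_integral_hat_sum_slope_xi_le(2)[OF I s f f' q S])
  also have "\<dots> \<le> 2 * ?\<sigma> * s * (3 * S / (2 * pi * \<bar>real_of_int q\<bar>))"
    using V \<sigma> s by (intro mult_left_mono divide_right_mono) auto
  finally have "?X\<^sup>2 \<le> (6 * ?\<sigma> * s * S / (2 * pi * \<bar>real_of_int q\<bar>))\<^sup>2"
    by (intro power_mono) auto
  also have "\<dots> = 36 * ?\<sigma>\<^sup>2 * s\<^sup>2 / (2 * pi * real_of_int q)\<^sup>2 * S\<^sup>2"
    by (simp add: power_mult_distrib power_divide)
  also have "\<dots> \<le> 36 * ?\<sigma>\<^sup>2 * s\<^sup>2 / (2 * pi * real_of_int q)\<^sup>2 * (2 * (L2norm_sq f + L2norm_sq f'))"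
    using S2 by (intro mult_left_mono) auto
  also have "\<dots> = 72 * ?\<sigma>\<^sup>2 * s\<^sup>2 / (2 * pi * real_of_int q)\<^sup>2 * (L2norm_sq f + L2norm_sq f')"
    by simp
  finally show "?X\<^sup>2 \<le> 72 * ?\<sigma>\<^sup>2 * s\<^sup>2 / (2 * pi * real_of_int q)\<^sup>2 * (L2norm_sq f + L2norm_sq f')" .
qed

lemma hat_sum_integration_by_parts:
  assumes I: "finite I" and s: "s > 0" and f: "\<And>x. (f has_real_derivative f' x) (at x)"
    and f': "continuous_on {0..1} f'"
  shows "((\<lambda>x. f x * hat_sum_slope I c a s x) has_integral
          f 1 * hat_sum I c a s 1 - f 0 * hat_sum I c a s 0
          - integral {0..1} (\<lambda>x. f' x * hat_sum I c a s x))
         {0..1}"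
proof -
  define J where "J p = integral {0..1} (\<lambda>x. f' x * hat (s * x - a p))" for p
  have "((\<lambda>x. f' x * hat (s * x - a p)) has_integral J p) {0..1}" for p
    unfolding J_def by (intro integrable_integral integrable_continuous_interval continuous_intros f'
        continuous_on_compose2[OF continuous_on_hat]) auto
  then have "((\<lambda>x. \<Sum>p\<in>I. c p * (f' x * hat (s * x - a p))) has_integral (\<Sum>p\<in>I. c p * J p)) {0..1}"
    by (intro has_integral_sum I has_integral_mult_right)
  then have int_P: "integral {0..1} (\<lambda>x. f' x * hat_sum I c a s x) = (\<Sum>p\<in>I. c p * J p)"
    by (intro integral_unique) (simp add: hat_sum_def sum_distrib_left mult_ac)
  have "((\<lambda>x. \<Sum>p\<in>I. c p * (f x * (s * hat_slope (s * x - a p)))) has_integral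
          (\<Sum>p\<in>I. c p * (f 1 * hat (s - a p) - f 0 * hat (- a p) - J p))) {0..1}"
    unfolding J_def
    by (intro has_integral_sum I has_integral_mult_right hat_integration_by_parts[OF s f f'])
  moreover have "(\<Sum>p\<in>I. c p * (f 1 * hat (s - a p) - f 0 * hat (- a p) - J p))
      = f 1 * hat_sum I c a s 1 - f 0 * hat_sum I c a s 0 - (\<Sum>p\<in>I. c p * J p)"
    by (simp add: hat_sum_def sum_distrib_left sum_subtractf sum.distrib algebra_simps)
  ultimately have "((\<lambda>x. \<Sum>p\<in>I. c p * (f x * (s * hat_slope (s * x - a p)))) has_integral
      f 1 * hat_sum I c a s 1 - f 0 * hat_sum I c a s 0 - (\<Sum>p\<in>I. c p * J p)) {0..1}"
    by simp
  then show ?thesis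
    unfolding int_P
    by (rule has_integral_eq[rotated]) (simp add: hat_sum_slope_def sum_distrib_left mult_ac)
qed

text \<open>Periodicity of f and of the hat sum removes the boundary terms of the integration by parts.\<close>

lemma sq_norm_set_integral_hat_sum_slope_le:
  assumes I: "finite I" and s: "s > 0" and f: "\<And>x. (f has_real_derivative f' x) (at x)"
    and f': "continuous_on {0..1} f'" and f01: "f 0 = f 1"
    and P01: "hat_sum I c a s 0 = hat_sum I c a s 1"
  shows "(cmod (LINT x:Dom|lborel. of_real (f x) * of_real (hat_sum_slope I c a s x)))\<^sup>2
      \<le> L2norm_sq f' * L2norm_sq (hat_sum I c a s)"
proof -
  let ?P = "hat_sum I c a s" and ?D = "hat_sum_slope I c a s"
  have ibp: "integral {0..1} (\<lambda>x. f x * ?D x) = - integral {0..1} (\<lambda>x. f' x * ?P x)"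
    using integral_unique[OF hat_sum_integration_by_parts[OF I s f f']] f01 P01 by simp
  have cf: "continuous_on {0..1} f"
    using f by (meson DERIV_isCont continuous_at_imp_continuous_on)
  have "cmod (of_real (?D x)) \<le> (\<Sum>p\<in>I. \<bar>c p\<bar>) * s" for x
    using abs_hat_sum_slope_le[of s] s by simp
  then have "set_integrable lborel Dom (\<lambda>x. complex_of_real (f x) * of_real (?D x))"
    by (intro L2_bounded_kernel_integrable L2_if_continuous cf) auto
  then have "(LINT x:Dom|lborel. complex_of_real (f x) * of_real (?D x))
      = integral {0..1} (\<lambda>x. of_real (f x * ?D x))"
    using set_borel_integral_eq_integral(2) by (simp add: Dom_def integral_open_interval_real)
  also have "\<dots> = of_real (integral {0..1} (\<lambda>x. f x * ?D x))"
    using integral_unique[OF has_integral_linear[OF hat_sum_integration_by_parts[OF I s f f']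
        bounded_linear_of_real]]
      integral_unique[OF hat_sum_integration_by_parts[OF I s f f']] by (simp add: o_def)
  finally have "cmod (LINT x:Dom|lborel. of_real (f x) * of_real (?D x))
      = \<bar>LINT x:Dom|lborel. f' x * ?P x\<bar>"
    using ibp f' by (simp add: set_integral_Dom_eq_integral continuous_intros)
  also have "\<dots> \<le> (LINT x:Dom|lborel. \<bar>f' x * ?P x\<bar>)"
    using set_integral_norm_bound[OF set_integrable_Dom_if_continuous, of "\<lambda>x. f' x * ?P x"] f'
    by (simp add: continuous_intros)
  finally have "(cmod (LINT x:Dom|lborel. of_real (f x) * of_real (?D x)))\<^sup>2
      \<le> (LINT x:Dom|lborel. \<bar>f' x * ?P x\<bar>)\<^sup>2"
    by (intro power_mono) auto
  also have "\<dots> \<le> L2norm_sq f' * L2norm_sq ?P"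
    by (rule L2_Cauchy_Schwarz[OF L2_if_continuous[OF f'] L2_if_continuous[OF continuous_on_hat_sum]])
  finally show ?thesis .
qed

lemma H1per_hat_sum_slope_xi_le:
  assumes H: "H1per u u'" and I: "finite I" and s: "s > 0" and q: "q \<noteq> 0"
  shows "(cmod (LINT x:Dom|lborel. of_real (u x) * (of_real (hat_sum_slope I c a s x) * xi q x)))\<^sup>2
      \<le> 16 * (\<Sum>p\<in>I. \<bar>c p\<bar>)\<^sup>2 * H1norm_sq u u'"
    and "(cmod (LINT x:Dom|lborel. of_real (u x) * (of_real (hat_sum_slope I c a s x) * xi q x)))\<^sup>2
      \<le> 144 * (\<Sum>p\<in>I. \<bar>c p\<bar>)\<^sup>2 * s\<^sup>2 / (2 * pi * real_of_int q)\<^sup>2 * H1norm_sq u u'"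
proof -
  let ?W = "\<lambda>x. of_real (hat_sum_slope I c a s x) * xi q x"
  have W: "?W \<in> borel_measurable lborel" by measurable
  have bound: "cmod (?W x) \<le> (\<Sum>p\<in>I. \<bar>c p\<bar>) * s" for x
    using s by (intro norm_hat_sum_slope_xi_le) simp
  note smooth = sq_norm_set_integral_hat_sum_slope_xi_le[OF I s smooth_periodic_has_real_derivative
      smooth_periodic_continuous_on_deriv q]
  have "(cmod (LINT x:Dom|lborel. of_real (u x) * ?W x))\<^sup>2 \<le> 2 * (K * L2norm_sq u + K * L2norm_sq u')"
    if "K \<ge> 0" and "\<And>f. smooth_periodic f \<Longrightarrow>
      (cmod (LINT x:Dom|lborel. of_real (f x) * ?W x))\<^sup>2 \<le> K * (L2norm_sq f + L2norm_sq (deriv f))" for K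
    using that by (intro H1per_kernel_bound[OF H W bound]) (simp_all add: distrib_left)
  then have "(cmod (LINT x:Dom|lborel. of_real (u x) * ?W x))\<^sup>2 \<le> 2 * K * H1norm_sq u u'"
    if "K \<ge> 0" and "\<And>f. smooth_periodic f \<Longrightarrow>
      (cmod (LINT x:Dom|lborel. of_real (f x) * ?W x))\<^sup>2 \<le> K * (L2norm_sq f + L2norm_sq (deriv f))" for K
    using that by (simp add: H1norm_sq_def algebra_simps)
  from this[OF _ smooth(1)] this[OF _ smooth(2)]
  show "(cmod (LINT x:Dom|lborel. of_real (u x) * ?W x))\<^sup>2 \<le> 16 * (\<Sum>p\<in>I. \<bar>c p\<bar>)\<^sup>2 * H1norm_sq u u'"
    and "(cmod (LINT x:Dom|lborel. of_real (u x) * ?W x))\<^sup>2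
      \<le> 144 * (\<Sum>p\<in>I. \<bar>c p\<bar>)\<^sup>2 * s\<^sup>2 / (2 * pi * real_of_int q)\<^sup>2 * H1norm_sq u u'"
    by simp_all
qed

lemma H1per_hat_sum_slope_le:
  assumes H: "H1per u u'" and I: "finite I" and s: "s > 0"
    and P01: "hat_sum I c a s 0 = hat_sum I c a s 1"
  shows "(cmod (LINT x:Dom|lborel. of_real (u x) * of_real (hat_sum_slope I c a s x)))\<^sup>2
      \<le> 4 * (\<Sum>p\<in>I. \<bar>c p\<bar>)\<^sup>2 / s * H1semi_sq u'"
proof -
  let ?W = "\<lambda>x. complex_of_real (hat_sum_slope I c a s x)"
  have W: "?W \<in> borel_measurable lborel" by measurable
  have bound: "cmod (?W x) \<le> (\<Sum>p\<in>I. \<bar>c p\<bar>) * s" for x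
    using abs_hat_sum_slope_le[of s] s by simp
  have "(cmod (LINT x:Dom|lborel. of_real (f x) * ?W x))\<^sup>2
      \<le> 0 * L2norm_sq f + 2 * (\<Sum>p\<in>I. \<bar>c p\<bar>)\<^sup>2 / s * L2norm_sq (deriv f)"
    if f: "smooth_periodic f" for f
  proof -
    have "f 0 = f 1" using f unfolding smooth_periodic_def by (metis add_0)
    then have "(cmod (LINT x:Dom|lborel. of_real (f x) * ?W x))\<^sup>2
        \<le> L2norm_sq (deriv f) * L2norm_sq (hat_sum I c a s)"
      by (intro sq_norm_set_integral_hat_sum_slope_le[OF I s _ _ _ P01]
          smooth_periodic_has_real_derivative[OF f] smooth_periodic_continuous_on_deriv[OF f])
    also have "\<dots> \<le> L2norm_sq (deriv f) * (2 * (\<Sum>p\<in>I. \<bar>c p\<bar>)\<^sup>2 / s)"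
      by (intro mult_left_mono L2norm_sq_hat_sum_le[OF I s] L2norm_sq_nonneg)
    finally show ?thesis by (simp add: algebra_simps)
  qed
  from H1per_kernel_bound[OF H W bound _ _ this] s show ?thesis
    by (simp add: H1semi_sq_def algebra_simps)
qed

lemma L2_hat_sum_xi_le:
  assumes u: "L2 u" and I: "finite I" and s: "s > 0"
  shows "(cmod (LINT x:Dom|lborel. of_real (u x) * (of_real (hat_sum I c a s x) * xi q x)))\<^sup>2
      \<le> 2 * (\<Sum>p\<in>I. \<bar>c p\<bar>)\<^sup>2 / s * L2norm_sq u"
proof -
  let ?P = "hat_sum I c a s"
  have "set_integrable lborel Dom (\<lambda>x. of_real (u x) * (of_real (?P x) * xi q x))"
    using norm_hat_sum_xi_le by (intro L2_bounded_kernel_integrable[OF u]) auto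
  then have "cmod (LINT x:Dom|lborel. of_real (u x) * (of_real (?P x) * xi q x))
      \<le> (LINT x:Dom|lborel. \<bar>u x * ?P x\<bar>)"
    by (auto dest: set_integral_norm_bound simp: norm_mult abs_mult)
  then have "(cmod (LINT x:Dom|lborel. of_real (u x) * (of_real (?P x) * xi q x)))\<^sup>2
      \<le> (LINT x:Dom|lborel. \<bar>u x * ?P x\<bar>)\<^sup>2"
    by (intro power_mono) auto
  also have "\<dots> \<le> L2norm_sq u * L2norm_sq ?P"
    by (rule L2_Cauchy_Schwarz[OF u L2_if_continuous[OF continuous_on_hat_sum]])
  also have "\<dots> \<le> L2norm_sq u * (2 * (\<Sum>p\<in>I. \<bar>c p\<bar>)\<^sup>2 / s)"
    by (intro mult_left_mono L2norm_sq_hat_sum_le[OF I s] L2norm_sq_nonneg)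
  finally show ?thesis by (simp add: algebra_simps)
qed

lemma vector_derivative_eq_hat_sum_slope:
  assumes rep: "\<And>x. x \<in> Dom \<Longrightarrow> g x = of_real (hat_sum I c a s x)" and s: "s > 0"
    and x: "x \<in> Dom" "x \<notin> (\<lambda>(p, e). (a p + e) / s) ` (I \<times> {-1, 0, 1})"
  shows "vector_derivative g (at x) = of_real (hat_sum_slope I c a s x)"
proof -
  have "s * x - a p \<notin> {-1, 0, 1}" if "p \<in> I" for p
  proof
    assume "s * x - a p \<in> {-1, 0, 1}"
    then obtain e where "e \<in> {-1, 0, 1}" "s * x - a p = e" by blast
    moreover from this(2) have "x = (a p + e) / s" using s by (simp add: field_simps)
    ultimately have "x \<in> (\<lambda>(p, e). (a p + e) / s) ` (I \<times> {-1, 0, 1})"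
      using \<open>p \<in> I\<close> by (intro image_eqI[where x = "(p, e)"]) auto
    with x(2) show False by contradiction
  qed
  then have "((\<lambda>y. of_real (hat_sum I c a s y)) has_vector_derivative
      of_real (hat_sum_slope I c a s x)) (at x)"
    by (intro has_vector_derivative_of_real hat_sum_has_real_derivative)
  then have "(g has_vector_derivative of_real (hat_sum_slope I c a s x)) (at x)"
    by (rule has_vector_derivative_transform_within_open[where S = Dom])
       (use x rep in \<open>auto simp: Dom_def\<close>)
  then show ?thesis by (rule vector_derivative_at)
qed

lemma aform_hat_sum_xihat:
  assumes rep: "\<And>x. x \<in> Dom \<Longrightarrow> g x = of_real (hat_sum I c a s x)" and I: "finite I" and s: "s > 0"
    and L2: "L2 \<eta>" "L2 \<beta>" "L2 \<rho>"
  shows "aform \<eta> \<beta> \<rho> g (xihat q) = of_real (sobolev_weight q) *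
      (of_int (- q) * (2 * of_real pi * \<i>) *
          (LINT x:Dom|lborel. of_real (\<eta> x) * (of_real (hat_sum_slope I c a s x) * xi (- q) x))
       + (LINT x:Dom|lborel. of_real (\<beta> x) * (of_real (hat_sum_slope I c a s x) * xi (- q) x))
       + (LINT x:Dom|lborel. of_real (\<rho> x) * (of_real (hat_sum I c a s x) * xi (- q) x)))"
proof -
  let ?D = "\<lambda>x. of_real (hat_sum_slope I c a s x) * xi (- q) x"
  let ?P = "\<lambda>x. of_real (hat_sum I c a s x) * xi (- q) x"
  let ?w = "of_real (sobolev_weight q) :: complex"
    and ?\<omega> = "of_int (- q) * (2 * of_real pi * \<i>) :: complex"
  let ?K = "(\<lambda>(p, e). (a p + e) / s) ` (I \<times> {-1, 0, 1})"
  \<comment> \<open>the kinks of the hats, off which g has derivative \<open>hat_sum_slope I c a s\<close>\<close>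
  have "aform \<eta> \<beta> \<rho> g (xihat q) = (LINT x:Dom|lborel.
      ?w * ?\<omega> * (of_real (\<eta> x) * ?D x) + ?w * (of_real (\<beta> x) * ?D x) + ?w * (of_real (\<rho> x) * ?P x))"
    unfolding aform_def set_lebesgue_integral_def
  proof (rule integral_discrete_difference[where X = ?K])
    show "countable ?K" using I by (intro countable_finite) auto
    fix x assume "x \<notin> ?K"
    then show "indicator Dom x *\<^sub>R
        (of_real (\<eta> x) * vector_derivative g (at x) * cnj (vector_derivative (xihat q) (at x))
        + of_real (\<beta> x) * vector_derivative g (at x) * cnj (xihat q x)
        + of_real (\<rho> x) * g x * cnj (xihat q x))
      = indicator Dom x *\<^sub>R (?w * ?\<omega> * (of_real (\<eta> x) * ?D x) + ?w * (of_real (\<beta> x) * ?D x)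
        + ?w * (of_real (\<rho> x) * ?P x))"
      by (cases "x \<in> Dom")
         (simp_all add: vector_derivative_eq_hat_sum_slope[OF rep s] rep vector_derivative_xihat xihat_eq
           cnj_xi algebra_simps)
  qed auto
  also have "\<dots> = ?w * ?\<omega> * (LINT x:Dom|lborel. of_real (\<eta> x) * ?D x)
      + ?w * (LINT x:Dom|lborel. of_real (\<beta> x) * ?D x) + ?w * (LINT x:Dom|lborel. of_real (\<rho> x) * ?P x)"
  proof -
    note D = L2_bounded_kernel_integrable[OF _ _ norm_hat_sum_slope_xi_le[OF less_imp_le[OF s]]]
    have "set_integrable lborel Dom (\<lambda>x. of_real (\<eta> x) * ?D x)"
      "set_integrable lborel Dom (\<lambda>x. of_real (\<beta> x) * ?D x)"
      "set_integrable lborel Dom (\<lambda>x. of_real (\<rho> x) * ?P x)"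
      using L2 by (auto intro: D L2_bounded_kernel_integrable[OF _ _ norm_hat_sum_xi_le])
    then show ?thesis
      by (simp add: set_integral_add set_integral_mult_right set_integrable_mult_right)
  qed
  finally show ?thesis by (simp add: algebra_simps)
qed

lemma sq_norm_aform_hat_sum_xihat_le:
  assumes rep: "\<And>x. x \<in> Dom \<Longrightarrow> g x = of_real (hat_sum I c a s x)" and I: "finite I" and s: "s > 0"
    and L2: "L2 \<eta>" "L2 \<beta>" "L2 \<rho>"
  shows "(cmod (aform \<eta> \<beta> \<rho> g (xihat q)))\<^sup>2 \<le> 3 * (
      (sobolev_weight q)\<^sup>2 * (2 * pi * real_of_int q)\<^sup>2
        * (cmod (LINT x:Dom|lborel. of_real (\<eta> x) * (of_real (hat_sum_slope I c a s x) * xi (- q) x)))\<^sup>2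
    + (sobolev_weight q)\<^sup>2
        * (cmod (LINT x:Dom|lborel. of_real (\<beta> x) * (of_real (hat_sum_slope I c a s x) * xi (- q) x)))\<^sup>2
    + (sobolev_weight q)\<^sup>2
        * (cmod (LINT x:Dom|lborel. of_real (\<rho> x) * (of_real (hat_sum I c a s x) * xi (- q) x)))\<^sup>2)"
proof -
  let ?w = "of_real (sobolev_weight q) :: complex"
    and ?\<omega> = "of_int (- q) * (2 * of_real pi * \<i>) :: complex"
  define I1 where
    "I1 = (LINT x:Dom|lborel. of_real (\<eta> x) * (of_real (hat_sum_slope I c a s x) * xi (- q) x))"
  define I2 where
    "I2 = (LINT x:Dom|lborel. of_real (\<beta> x) * (of_real (hat_sum_slope I c a s x) * xi (- q) x))"
  define I3 where
    "I3 = (LINT x:Dom|lborel. of_real (\<rho> x) * (of_real (hat_sum I c a s x) * xi (- q) x))"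
  have "aform \<eta> \<beta> \<rho> g (xihat q) = ?w * ?\<omega> * I1 + ?w * I2 + ?w * I3"
    using aform_hat_sum_xihat[OF rep I s L2, of q] unfolding I1_def I2_def I3_def
    by (simp add: algebra_simps)
  then have "(cmod (aform \<eta> \<beta> \<rho> g (xihat q)))\<^sup>2
      \<le> 3 * ((cmod (?w * ?\<omega> * I1))\<^sup>2 + (cmod (?w * I2))\<^sup>2 + (cmod (?w * I3))\<^sup>2)"
    by (simp only: norm_add3_sq_le)
  then show ?thesis
    unfolding I1_def[symmetric] I2_def[symmetric] I3_def[symmetric]
    by (simp add: norm_mult power_mult_distrib mult_ac)
qed

section \<open>Periodized wavelets as sums of hat functions\<close>

definition wav_coeff :: "nat \<Rightarrow> real" where
  "wav_coeff i = (if i = 2 then -3/2 else if i = 1 \<or> i = 3 then 1/2 else 1/4)"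

lemma wav_eq_sum_hat: "wav y = (\<Sum>i<5. wav_coeff i * hat (2 * y - (real i - 1)))"
  by (simp add: wav_def wav_coeff_def numeral_eq_Suc algebra_simps)

lemma two_powr_half: "(2::real) powr (real l / 2) = sqrt (2 ^ l)"
  by (simp add: powr_half_sqrt[symmetric] powr_powr powr_realpow[symmetric])

lemma J_nonempty: "J l0 L \<noteq> {}"
  unfolding J_def by auto

lemma J_scale_bounds:
  assumes "j \<in> J l0 L" and "l0 \<ge> 2" and "L > l0"
  shows "(2::real) ^ l0 \<le> 2 ^ (fst j + 1)" and "(2::real) ^ (fst j + 1) \<le> 2 ^ L"
proof -
  have "l0 \<le> fst j + 1" "fst j + 1 \<le> L" using assms unfolding J_def by auto
  then show "(2::real) ^ l0 \<le> 2 ^ (fst j + 1)" and "(2::real) ^ (fst j + 1) \<le> 2 ^ L"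
    by (intro power_increasing; simp)+
qed

lemma psi_scaling_eq: "psi l0 (l0 - 1, k) y = sqrt (2 ^ l0) * hat (2 ^ l0 * y - real_of_int k)"
  by (simp add: psi_def two_powr_half)

lemma psi_wavelet_eq:
  assumes "l \<noteq> l0 - 1"
  shows "psi l0 (l, k) y
    = (\<Sum>i<5. sqrt (2 ^ l) * wav_coeff i * hat (2 ^ (l + 1) * y - (2 * real_of_int k + real i - 1)))"
  using assms by (simp add: psi_def two_powr_half wav_eq_sum_hat sum_distrib_left algebra_simps)

lemma psi_eq_sum_hat:
  assumes j: "j \<in> J l0 L" and l0: "l0 \<ge> 2"
  obtains w t :: "nat \<Rightarrow> real"
  where "\<And>y. psi l0 j y = (\<Sum>i<5. w i * hat (2 ^ (fst j + 1) * y - t i))"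
    and "\<And>i. \<bar>w i\<bar> \<le> 2 * sqrt (2 ^ fst j)"
    and "\<And>i. i < 5 \<Longrightarrow> -1 \<le> t i \<and> t i \<le> 2 ^ (fst j + 1) + 1"
proof -
  obtain l k where jlk: "j = (l, k)" by (cases j)
  from j consider "l = l0 - 1" "0 \<le> k" "k < 2 ^ l0" | "l0 \<le> l" "0 \<le> k" "k < 2 ^ l"
    unfolding J_def jlk by auto
  then show ?thesis
  proof cases
    case 1
    then have l0_eq: "l0 = l + 1" using l0 by simp
    let ?w = "\<lambda>i::nat. if i = 0 then sqrt (2 ^ l0) else 0"
    let ?t = "\<lambda>i::nat. if i = 0 then real_of_int k else 0"
    have "psi l0 j y = sqrt (2 ^ l0) * hat (2 ^ l0 * y - real_of_int k)" for y
      using psi_scaling_eq[of l0 k y] by (simp add: jlk 1)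
    then have "psi l0 j y = (\<Sum>i<5. ?w i * hat (2 ^ (l + 1) * y - ?t i))" for y
      by (simp add: l0_eq numeral_eq_Suc lessThan_Suc)
    moreover have "\<bar>?w i\<bar> \<le> 2 * sqrt (2 ^ l)" for i
      using real_sqrt_le_mono[of 2 4] by (simp add: l0_eq real_sqrt_mult mult_right_mono)
    moreover have "real_of_int k \<le> 2 ^ (l + 1)"
      using 1 l0_eq by (metis less_imp_le of_int_le_iff of_int_numeral of_int_power)
    then have "-1 \<le> ?t i \<and> ?t i \<le> 2 ^ (l + 1) + 1" for i
      using 1 by auto
    ultimately show ?thesis using that[of ?w ?t] unfolding jlk fst_conv by blast
  next
    case 2
    let ?w = "\<lambda>i. sqrt (2 ^ l) * wav_coeff i"
    let ?t = "\<lambda>i. 2 * real_of_int k + real i - 1"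
    have "psi l0 j y = (\<Sum>i<5. ?w i * hat (2 ^ (l + 1) * y - ?t i))" for y
      using 2 l0 by (simp add: jlk psi_wavelet_eq)
    moreover have "\<bar>?w i\<bar> \<le> 2 * sqrt (2 ^ l)" for i
      by (simp add: abs_mult wav_coeff_def)
    moreover have "real_of_int k + 1 \<le> 2 ^ l"
      using 2 by (metis int_less_real_le of_int_numeral of_int_power)
    then have "-1 \<le> ?t i \<and> ?t i \<le> 2 ^ (l + 1) + 1" if "i < 5" for i
      using 2 that by auto
    ultimately show ?thesis using that[of ?w ?t] unfolding jlk fst_conv by blast
  qed
qed

lemma sum_hat_eq_0_outside:
  assumes s: "s \<ge> 4" and t: "\<And>i. i \<in> I \<Longrightarrow> -1 \<le> t i \<and> t i \<le> s + 1"
    and y: "y \<le> -1/2 \<or> y \<ge> 3/2"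
  shows "(\<Sum>i\<in>I. w i * hat (s * y - t i)) = 0"
proof -
  have "hat (s * y - t i) = 0" if i: "i \<in> I" for i
  proof (rule hat_eq_0)
    from y show "1 \<le> \<bar>s * y - t i\<bar>"
    proof
      assume "y \<le> -1/2"
      then have "s * y \<le> s * (-1/2)" using s by (intro mult_left_mono) auto
      then show ?thesis using t[OF i] s by linarith
    next
      assume "y \<ge> 3/2"
      then have "s * y \<ge> s * (3/2)" using s by (intro mult_left_mono) auto
      then show ?thesis using t[OF i] s by linarith
    qed
  qed
  then show ?thesis by simp
qed

lemma periodize_eq_three_shifts:
  assumes supp: "\<And>y. y \<le> -1/2 \<or> y \<ge> 3/2 \<Longrightarrow> f y = 0" and x: "x \<in> Dom"
  shows "periodize f x = f (x - 1) + f x + f (x + 1)"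
proof -
  have "f (x + real_of_int n) = 0" if "n \<notin> {-1, 0, 1}" for n
  proof (rule supp)
    from that have "real_of_int n \<le> -2 \<or> real_of_int n \<ge> 2" by auto
    then show "x + real_of_int n \<le> -1/2 \<or> x + real_of_int n \<ge> 3/2"
      using x by (auto simp: Dom_def)
  qed
  then have "periodize f x = infsum (\<lambda>n::int. f (x + real_of_int n)) {-1, 0, 1}"
    unfolding periodize_def by (intro infsum_cong_neutral) auto
  then show ?thesis by simp
qed

lemma hat_sum_shifted_copies:
  "hat_sum ({-1, 0, 1} \<times> I) (\<lambda>p. c (snd p)) (\<lambda>p. t (snd p) - s * real_of_int (fst p)) s x
    = (\<Sum>n\<in>{-1, 0, 1::int}. \<Sum>i\<in>I. c i * hat (s * (x + real_of_int n) - t i))"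
  unfolding hat_sum_def sum.cartesian_product by (simp add: split_beta algebra_simps)

lemma psihat_eq_hat_sum:
  assumes j: "j \<in> J l0 L" and l0: "l0 \<ge> 2" and L: "L > l0"
  obtains I :: "(int \<times> nat) set" and c a s where "finite I" and "2 ^ l0 \<le> s" and "s \<le> 2 ^ L"
    and "\<And>x. x \<in> Dom \<Longrightarrow> psihat l0 j x = of_real (hat_sum I c a s x)"
    and "(\<Sum>p\<in>I. \<bar>c p\<bar>)\<^sup>2 \<le> 1800 / s"
    and "hat_sum I c a s 0 = hat_sum I c a s 1"
proof -
  let ?l = "fst j" and ?s = "(2::real) ^ (fst j + 1)"
  obtain w t :: "nat \<Rightarrow> real" where rep: "\<And>y. psi l0 j y = (\<Sum>i<5. w i * hat (?s * y - t i))"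
    and w: "\<And>i. \<bar>w i\<bar> \<le> 2 * sqrt (2 ^ ?l)"
    and t: "\<And>i. i < 5 \<Longrightarrow> -1 \<le> t i \<and> t i \<le> ?s + 1"
    using psi_eq_sum_hat[OF j l0] by blast
  have s: "2 ^ l0 \<le> ?s" "?s \<le> 2 ^ L" using J_scale_bounds[OF j l0 L] .
  have "(2::real) ^ 2 \<le> 2 ^ l0" using l0 by (intro power_increasing) auto
  with s have supp: "psi l0 j y = 0" if "y \<le> -1/2 \<or> y \<ge> 3/2" for y
    unfolding rep using t that by (intro sum_hat_eq_0_outside) auto
  \<comment> \<open>the index (n, i) stands for the i-th hat of \<open>psi l0 j\<close> shifted by n\<close>
  define I :: "(int \<times> nat) set" where "I = {-1, 0, 1} \<times> {..<5}"
  define c where "c p = w (snd p) / 2 ^ ?l" for p :: "int \<times> nat"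
  define a where "a p = t (snd p) - ?s * real_of_int (fst p)" for p :: "int \<times> nat"
  have P: "hat_sum I c a ?s x = (psi l0 j (x - 1) + psi l0 j x + psi l0 j (x + 1)) / 2 ^ ?l" for x
    using hat_sum_shifted_copies[of "{..<5}" "\<lambda>i. w i / 2 ^ ?l" t ?s x]
    unfolding I_def c_def[abs_def] a_def[abs_def] rep
    by (simp add: sum_divide_distrib[symmetric] add_divide_distrib algebra_simps)
  have "finite I" by (simp add: I_def)
  moreover have "psihat l0 j x = of_real (hat_sum I c a ?s x)" if "x \<in> Dom" for x
  proof -
    have "(2::real) powr (- real ?l) = inverse (2 ^ ?l)" by (simp add: powr_minus powr_realpow)
    moreover have "periodize (psi l0 j) x = psi l0 j (x - 1) + psi l0 j x + psi l0 j (x + 1)"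
      using supp that by (rule periodize_eq_three_shifts)
    ultimately show ?thesis unfolding psihat_def P by (simp add: divide_inverse mult.commute)
  qed
  moreover have "(\<Sum>p\<in>I. \<bar>c p\<bar>)\<^sup>2 \<le> 1800 / ?s"
  proof -
    have "(\<Sum>p\<in>I. \<bar>c p\<bar>) \<le> (\<Sum>p\<in>I. 2 * sqrt (2 ^ ?l) / 2 ^ ?l)"
      using w by (intro sum_mono) (simp add: c_def abs_divide divide_right_mono)
    also have "\<dots> = 30 * sqrt (2 ^ ?l) / 2 ^ ?l" by (simp add: I_def card_cartesian_product)
    finally have "(\<Sum>p\<in>I. \<bar>c p\<bar>)\<^sup>2 \<le> (30 * sqrt (2 ^ ?l) / 2 ^ ?l)\<^sup>2"
      by (intro power_mono) (auto intro: sum_nonneg)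
    then show ?thesis by (simp add: power_divide power_mult_distrib power2_eq_square)
  qed
  moreover have "hat_sum I c a ?s 0 = hat_sum I c a ?s 1"
    using supp[of "0 - 1"] supp[of "1 + 1"] unfolding P by simp
  ultimately show ?thesis using s by (intro that)
qed

section \<open>Coherence estimates\<close>

lemma H1per_wavelet_term_le:
  assumes H: "H1per u u'" and I: "finite I" and s: "0 < s" "s \<le> 2 ^ L" and q: "q \<noteq> 0"
    and \<sigma>: "(\<Sum>p\<in>I. \<bar>c p\<bar>)\<^sup>2 \<le> 1800 / s"
  shows "(cmod (LINT x:Dom|lborel. of_real (u x) * (of_real (hat_sum_slope I c a s x) * xi q x)))\<^sup>2
      \<le> 28800 * H1norm_sq u u' * min (2 ^ L / (real_of_int q)\<^sup>2) (1 / \<bar>real_of_int q\<bar>)"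
proof (rule le_min_scale_if_le[OF s q])
  have H0: "H1norm_sq u u' \<ge> 0" by (simp add: H1norm_sq_def L2norm_sq_nonneg add_nonneg_nonneg)
  then show "28800 * H1norm_sq u u' \<ge> 0" by simp
  have "16 * (\<Sum>p\<in>I. \<bar>c p\<bar>)\<^sup>2 * H1norm_sq u u' \<le> 16 * (1800 / s) * H1norm_sq u u'"
    using \<sigma> H0 by (intro mult_right_mono) auto
  then have small: "16 * (\<Sum>p\<in>I. \<bar>c p\<bar>)\<^sup>2 * H1norm_sq u u' \<le> 28800 * H1norm_sq u u' / s" by simp
  show "(cmod (LINT x:Dom|lborel. of_real (u x) * (of_real (hat_sum_slope I c a s x) * xi q x)))\<^sup>2
      \<le> 28800 * H1norm_sq u u' / s"
    by (rule order_trans[OF H1per_hat_sum_slope_xi_le(1)[OF H I s(1) q] small])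
  have "9 \<le> pi\<^sup>2" using pi_gt3 power_mono[of 3 pi 2] by simp
  then have "144 * (\<Sum>p\<in>I. \<bar>c p\<bar>)\<^sup>2 * s\<^sup>2 / (2 * pi * real_of_int q)\<^sup>2 * H1norm_sq u u'
      \<le> 144 * (1800 / s) * s\<^sup>2 / (4 * 9 * (real_of_int q)\<^sup>2) * H1norm_sq u u'"
    using \<sigma> H0 q by (intro mult_right_mono divide_mono mult_mono) (auto simp: power_mult_distrib)
  also have "\<dots> = 7200 * H1norm_sq u u' * s / (real_of_int q)\<^sup>2"
    using s by (simp add: power2_eq_square field_simps)
  also have "\<dots> \<le> 28800 * H1norm_sq u u' * s / (real_of_int q)\<^sup>2"
    using s H0 by (intro divide_right_mono mult_right_mono) auto
  finally show "(cmod (LINT x:Dom|lborel. of_real (u x) * (of_real (hat_sum_slope I c a s x) * xi q x)))\<^sup>2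
      \<le> 28800 * H1norm_sq u u' * s / (real_of_int q)\<^sup>2"
    by (rule order_trans[OF H1per_hat_sum_slope_xi_le(2)[OF H I s(1) q]])
qed

lemma L2_wavelet_term_le:
  assumes u: "L2 u" and I: "finite I" and s: "s > 0" and \<sigma>: "(\<Sum>p\<in>I. \<bar>c p\<bar>)\<^sup>2 \<le> 1800 / s"
  shows "(cmod (LINT x:Dom|lborel. of_real (u x) * (of_real (hat_sum I c a s x) * xi q x)))\<^sup>2
      \<le> 3600 / s\<^sup>2 * L2norm_sq u"
proof (rule order_trans[OF L2_hat_sum_xi_le[OF u I s]])
  show "2 * (\<Sum>p\<in>I. \<bar>c p\<bar>)\<^sup>2 / s * L2norm_sq u \<le> 3600 / s\<^sup>2 * L2norm_sq u"
    using \<sigma> s L2norm_sq_nonneg[of u]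
    by (intro mult_right_mono order_trans[OF divide_right_mono[OF mult_left_mono[OF \<sigma>]]])
       (auto simp: power2_eq_square)
qed

lemma H1per_wavelet_mean_term_le:
  assumes H: "H1per u u'" and I: "finite I" and s: "s > 0"
    and P01: "hat_sum I c a s 0 = hat_sum I c a s 1" and \<sigma>: "(\<Sum>p\<in>I. \<bar>c p\<bar>)\<^sup>2 \<le> 1800 / s"
  shows "(cmod (LINT x:Dom|lborel. of_real (u x) * of_real (hat_sum_slope I c a s x)))\<^sup>2
      \<le> 7200 / s\<^sup>2 * H1semi_sq u'"
proof (rule order_trans[OF H1per_hat_sum_slope_le[OF H I s P01]])
  show "4 * (\<Sum>p\<in>I. \<bar>c p\<bar>)\<^sup>2 / s * H1semi_sq u' \<le> 7200 / s\<^sup>2 * H1semi_sq u'"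
    using \<sigma> s L2norm_sq_nonneg[of u']
    by (intro mult_right_mono order_trans[OF divide_right_mono[OF mult_left_mono[OF \<sigma>]]])
       (auto simp: power2_eq_square H1semi_sq_def)
qed

lemma aform_psihat_xihat_le:
  assumes l0: "l0 \<ge> 2" and L: "L > l0" and j: "j \<in> J l0 L"
    and H: "H1per \<eta> \<eta>'" "H1per \<beta> \<beta>'" and \<rho>: "L2 \<rho>" and q: "q \<noteq> 0"
  shows "(cmod (aform \<eta> \<beta> \<rho> (psihat l0 j) (xihat q)))\<^sup>2
    \<le> 86400 * (H1norm_sq \<eta> \<eta>' + H1norm_sq \<beta> \<beta>' / (real_of_int q)\<^sup>2 + L2norm_sq \<rho>)
        * min (2 ^ L / (real_of_int q)\<^sup>2) (1 / \<bar>real_of_int q\<bar>)"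
proof -
  let ?M = "min (2 ^ L / (real_of_int q)\<^sup>2) (1 / \<bar>real_of_int q\<bar>)" and ?w = "sobolev_weight q"
  obtain I :: "(int \<times> nat) set" and c a s where I: "finite I" and s: "2 ^ l0 \<le> s" "s \<le> 2 ^ L"
    and rep: "\<And>x. x \<in> Dom \<Longrightarrow> psihat l0 j x = of_real (hat_sum I c a s x)"
    and \<sigma>: "(\<Sum>p\<in>I. \<bar>c p\<bar>)\<^sup>2 \<le> 1800 / s"
    using psihat_eq_hat_sum[OF j l0 L] by metis
  have s1: "1 \<le> s" using s(1) one_le_power[of "2::real" l0] by linarith
  then have s0: "0 < s" by linarith
  have q': "- q \<noteq> 0" using q by simp
  define I1 where
    "I1 = (LINT x:Dom|lborel. of_real (\<eta> x) * (of_real (hat_sum_slope I c a s x) * xi (- q) x))"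
  define I2 where
    "I2 = (LINT x:Dom|lborel. of_real (\<beta> x) * (of_real (hat_sum_slope I c a s x) * xi (- q) x))"
  define I3 where
    "I3 = (LINT x:Dom|lborel. of_real (\<rho> x) * (of_real (hat_sum I c a s x) * xi (- q) x))"
  have "(cmod (aform \<eta> \<beta> \<rho> (psihat l0 j) (xihat q)))\<^sup>2
      \<le> 3 * ((?w\<^sup>2 * (2 * pi * real_of_int q)\<^sup>2) * (cmod I1)\<^sup>2
        + ?w\<^sup>2 * (cmod I2)\<^sup>2 + ?w\<^sup>2 * (cmod I3)\<^sup>2)"
    using sq_norm_aform_hat_sum_xihat_le[OF rep I s0 H1per_L2[OF H(1)] H1per_L2[OF H(2)] \<rho>, of q]
    unfolding I1_def I2_def I3_def by simp
  also have "\<dots> \<le> 3 * (1 * (28800 * H1norm_sq \<eta> \<eta>' * ?M)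
      + 1 / (real_of_int q)\<^sup>2 * (28800 * H1norm_sq \<beta> \<beta>' * ?M)
      + ?M * (3600 * L2norm_sq \<rho>))"
  proof -
    have "1 \<le> s\<^sup>2" using s1 by (simp add: one_le_power)
    then have "3600 / s\<^sup>2 * L2norm_sq \<rho> \<le> 3600 * L2norm_sq \<rho>"
      using L2norm_sq_nonneg[of \<rho>] by (intro mult_right_mono) (auto simp: divide_le_eq)
    then have "(cmod I3)\<^sup>2 \<le> 3600 * L2norm_sq \<rho>"
      unfolding I3_def by (rule order_trans[OF L2_wavelet_term_le[OF \<rho> I s0 \<sigma>]])
    then have "?w\<^sup>2 * (cmod I3)\<^sup>2 \<le> ?M * (3600 * L2norm_sq \<rho>)"
      using sobolev_weight_sq_le[OF q] inv_sq_le_min_scale[OF q, of "2 ^ L"] by (intro mult_mono) auto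
    moreover have
      "(?w\<^sup>2 * (2 * pi * real_of_int q)\<^sup>2) * (cmod I1)\<^sup>2 \<le> 1 * (28800 * H1norm_sq \<eta> \<eta>' * ?M)"
      using H1per_wavelet_term_le[OF H(1) I s0 s(2) q' \<sigma>] unfolding I1_def
      by (intro mult_mono sobolev_weight_sq_mult_le) simp_all
    moreover have "?w\<^sup>2 * (cmod I2)\<^sup>2 \<le> 1 / (real_of_int q)\<^sup>2 * (28800 * H1norm_sq \<beta> \<beta>' * ?M)"
      using H1per_wavelet_term_le[OF H(2) I s0 s(2) q' \<sigma>] unfolding I2_def
      by (intro mult_mono sobolev_weight_sq_le[OF q]) simp_all
    ultimately show ?thesis by (intro mult_left_mono add_mono) simp_all
  qed
  also have "\<dots> \<le> 86400 * (H1norm_sq \<eta> \<eta>' + H1norm_sq \<beta> \<beta>' / (real_of_int q)\<^sup>2 + L2norm_sq \<rho>) * ?M"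
    using L2norm_sq_nonneg[of \<rho>] min_def by (simp add: algebra_simps)
  finally show ?thesis .
qed

lemma aform_psihat_xihat_0_le:
  assumes l0: "l0 \<ge> 2" and L: "L > l0" and j: "j \<in> J l0 L"
    and \<eta>: "L2 \<eta>" and \<beta>: "H1per \<beta> \<beta>'" and \<rho>: "L2 \<rho>"
  shows "(cmod (aform \<eta> \<beta> \<rho> (psihat l0 j) (xihat 0)))\<^sup>2
    \<le> 21600 * 2 powr (- 2 * real l0) * (H1semi_sq \<beta>' + L2norm_sq \<rho>)"
proof -
  obtain I :: "(int \<times> nat) set" and c a s where I: "finite I" and s: "2 ^ l0 \<le> s"
    and rep: "\<And>x. x \<in> Dom \<Longrightarrow> psihat l0 j x = of_real (hat_sum I c a s x)"
    and \<sigma>: "(\<Sum>p\<in>I. \<bar>c p\<bar>)\<^sup>2 \<le> 1800 / s" and P01: "hat_sum I c a s 0 = hat_sum I c a s 1"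
    using psihat_eq_hat_sum[OF j l0 L] by metis
  have s0: "0 < s" using s zero_less_power[of "2::real" l0] by linarith
  have "1 / s\<^sup>2 \<le> 1 / (2 ^ l0)\<^sup>2" using s by (simp add: frac_le power_mono)
  also have "\<dots> = 2 powr (- 2 * real l0)"
    by (simp add: powr_minus_divide powr_realpow[symmetric] powr_powr mult.commute power2_eq_square
        powr_add[symmetric])
  finally have inv_s: "1 / s\<^sup>2 \<le> 2 powr (- 2 * real l0)" .
  define I2 where
    "I2 = (LINT x:Dom|lborel. complex_of_real (\<beta> x) * of_real (hat_sum_slope I c a s x))"
  define I3 where
    "I3 = (LINT x:Dom|lborel. of_real (\<rho> x) * (of_real (hat_sum I c a s x) * xi 0 x))"
  have "(cmod (aform \<eta> \<beta> \<rho> (psihat l0 j) (xihat 0)))\<^sup>2 \<le> 3 * ((cmod I2)\<^sup>2 + (cmod I3)\<^sup>2)"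
    using sq_norm_aform_hat_sum_xihat_le[OF rep I s0 \<eta> H1per_L2[OF \<beta>] \<rho>, of 0]
    unfolding I2_def I3_def by simp
  also have "\<dots> \<le> 3 * (7200 / s\<^sup>2 * H1semi_sq \<beta>' + 3600 / s\<^sup>2 * L2norm_sq \<rho>)"
    using H1per_wavelet_mean_term_le[OF \<beta> I s0 P01 \<sigma>] L2_wavelet_term_le[OF \<rho> I s0 \<sigma>, of a 0]
    unfolding I2_def I3_def by (intro mult_left_mono add_mono) auto
  also have "\<dots> \<le> 21600 * (1 / s\<^sup>2) * (H1semi_sq \<beta>' + L2norm_sq \<rho>)"
    using L2norm_sq_nonneg[of \<rho>] s0 by (simp add: field_simps)
  also have "\<dots> \<le> 21600 * 2 powr (- 2 * real l0) * (H1semi_sq \<beta>' + L2norm_sq \<rho>)"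
    using inv_s by (intro mult_right_mono mult_left_mono) (auto simp: H1semi_sq_def L2norm_sq_nonneg)
  finally show ?thesis .
qed

theorem theorem4p2:
  fixes l0 :: nat
  assumes "l0 \<ge> 2"
  shows "\<exists>C>0. \<forall>(L::nat) \<eta> \<eta>' \<beta> \<beta>' \<rho>.
     L > l0 \<longrightarrow> H1per \<eta> \<eta>' \<longrightarrow> H1per \<beta> \<beta>' \<longrightarrow> L2 \<rho> \<longrightarrow>
       coherence l0 L \<eta> \<beta> \<rho> 0
          \<le> C * 2 powr (- 2 * real l0) * (H1semi_sq \<beta>' + L2norm_sq \<rho>)
     \<and> (\<forall>q::int. q \<noteq> 0 \<longrightarrow>
          coherence l0 L \<eta> \<beta> \<rho> q
            \<le> C * (H1norm_sq \<eta> \<eta>' + H1norm_sq \<beta> \<beta>' / (real_of_int q)\<^sup>2 + L2norm_sq \<rho>)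
                * min (2 ^ L / (real_of_int q)\<^sup>2) (1 / \<bar>real_of_int q\<bar>))"
proof (intro exI[of _ 86400] conjI allI impI)
  fix L :: nat and \<eta> \<eta>' \<beta> \<beta>' \<rho> :: "real \<Rightarrow> real"
  assume L: "L > l0" and \<eta>: "H1per \<eta> \<eta>'" and \<beta>: "H1per \<beta> \<beta>'" and \<rho>: "L2 \<rho>"
  have "(cmod (aform \<eta> \<beta> \<rho> (psihat l0 j) (xihat 0)))\<^sup>2
      \<le> 86400 * 2 powr (- 2 * real l0) * (H1semi_sq \<beta>' + L2norm_sq \<rho>)" if "j \<in> J l0 L" for j
    using aform_psihat_xihat_0_le[OF assms L that H1per_L2[OF \<eta>] \<beta> \<rho>]
    by (rule order_trans) (simp add: H1semi_sq_def L2norm_sq_nonneg)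
  then show "coherence l0 L \<eta> \<beta> \<rho> 0 \<le> 86400 * 2 powr (- 2 * real l0) * (H1semi_sq \<beta>' + L2norm_sq \<rho>)"
    unfolding coherence_def by (intro cSUP_least J_nonempty)
  fix q :: int assume "q \<noteq> 0"
  then show "coherence l0 L \<eta> \<beta> \<rho> q
      \<le> 86400 * (H1norm_sq \<eta> \<eta>' + H1norm_sq \<beta> \<beta>' / (real_of_int q)\<^sup>2 + L2norm_sq \<rho>)
        * min (2 ^ L / (real_of_int q)\<^sup>2) (1 / \<bar>real_of_int q\<bar>)"
    unfolding coherence_def
    by (intro cSUP_least J_nonempty aform_psihat_xihat_le[OF assms L _ \<eta> \<beta> \<rho>])
qed (simp)

end
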